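(* Let $\rho$ be a quantum state on $L^2(\mathbb{R}^n)$ and let $\chi\in\mathcal{S}(\mathbb{R}^n)$ with $\|\chi\|_{L^2}=1$. If the matrix element $M_\rho:\mathbb{R}^{4n}\to\mathbb{C}$ is rapidly decaying, then $M_\rho$ is a Schwartz function on $\mathbb{R}^{4n}$.
   Context: A quantum state is a positive semidefinite trace-class operator $\rho$ on $L^2(\mathbb{R}^n)$. For $\xi=(\xi_x,\xi_p)\in\mathbb{R}^{2n}$, $(D_\xi\phi)(y)=e^{i(y-\xi_x/2)\cdot\xi_p}\phi(y-\xi_x)$; $\chi_\alpha:=D_\alpha\chi$; $M_\rho(\alpha,\beta):=\langle\chi_\alpha|\rho|\chi_\beta\rangle=\int\overline{\chi_\alpha(x)}(\rho\chi_\beta)(x)dx$ for $\alpha,\beta\in\mathbb{R}^{2n}$. For $F:\mathbb{R}^m\to\mathbb{C}$, $|F|_{a,b}:=\sup_z|z^a\partial_z^bF(z)|$; $F$ is rapidly decaying if $|F|_{a,0}<\infty$ for all multi-indices $a$, and Schwartz if $|F|_{a,b}<\infty$ for all $a,b$. *)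

theory Defs
  imports "HOL-Analysis.Analysis"
begin

text \<open>Monomial z^a for a multi-index a (only its values on the standard Basis matter).\<close>
definition monomial :: "('a::euclidean_space \<Rightarrow> nat) \<Rightarrow> 'a \<Rightarrow> real" where
  "monomial a z = (\<Prod>b\<in>Basis. (z \<bullet> b) ^ a b)"

fun iter_partial :: "'a::euclidean_space list \<Rightarrow> ('a \<Rightarrow> complex) \<Rightarrow> 'a \<Rightarrow> complex" where
  "iter_partial [] F = F"
| "iter_partial (v # vs) F = (\<lambda>z. frechet_derivative (iter_partial vs F) (at z) v)"

definition rapidly_decaying :: "('a::euclidean_space \<Rightarrow> complex) \<Rightarrow> bool" where
  "rapidly_decaying F \<longleftrightarrow>
     (\<forall>a. \<exists>C. \<forall>z. norm (complex_of_real (monomial a z) * F z) \<le> C)"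

definition schwartz :: "('a::euclidean_space \<Rightarrow> complex) \<Rightarrow> bool" where
  "schwartz F \<longleftrightarrow>
     (\<forall>vs. set vs \<subseteq> Basis \<longrightarrow> (\<forall>z. iter_partial vs F differentiable (at z))) \<and>
     (\<forall>a vs. set vs \<subseteq> Basis \<longrightarrow>
        (\<exists>C. \<forall>z. norm (complex_of_real (monomial a z) * iter_partial vs F z) \<le> C))"

text \<open>Square-integrable (Borel measurable) functions R^n \<rightarrow> C; elements of L^2 are
  represented by such functions, identified up to a.e. equality.\<close>
definition sq_int :: "(real^'n \<Rightarrow> complex) \<Rightarrow> bool" where
  "sq_int f \<longleftrightarrow> f \<in> borel_measurable lborel \<and> integrable lborel (\<lambda>x. (norm (f x))\<^sup>2)"

definition l2_inner :: "(real^'n \<Rightarrow> complex) \<Rightarrow> (real^'n \<Rightarrow> complex) \<Rightarrow> complex" where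
  "l2_inner f g = (LINT x|lborel. cnj (f x) * g x)"

definition l2_norm :: "(real^'n \<Rightarrow> complex) \<Rightarrow> real" where
  "l2_norm f = sqrt (LINT x|lborel. (norm (f x))\<^sup>2)"

definition l2_bounded_operator :: "((real^'n \<Rightarrow> complex) \<Rightarrow> (real^'n \<Rightarrow> complex)) \<Rightarrow> bool" where
  "l2_bounded_operator T \<longleftrightarrow>
     (\<forall>f. sq_int f \<longrightarrow> sq_int (T f)) \<and>
     (\<forall>f g. sq_int f \<longrightarrow> sq_int g \<longrightarrow>
         (AE x in lborel. T (\<lambda>y. f y + g y) x = T f x + T g x)) \<and>
     (\<forall>c f. sq_int f \<longrightarrow> (AE x in lborel. T (\<lambda>y. c * f y) x = c * T f x)) \<and>
     (\<exists>C. \<forall>f. sq_int f \<longrightarrow> l2_norm (T f) \<le> C * l2_norm f)"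

definition l2_positive :: "((real^'n \<Rightarrow> complex) \<Rightarrow> (real^'n \<Rightarrow> complex)) \<Rightarrow> bool" where
  "l2_positive T \<longleftrightarrow>
     (\<forall>f. sq_int f \<longrightarrow> Im (l2_inner f (T f)) = 0 \<and> Re (l2_inner f (T f)) \<ge> 0)"

text \<open>Orthonormal basis of L^2(R^n) (countable, since L^2(R^n) is separable and infinite-dimensional).\<close>
definition l2_onb :: "(nat \<Rightarrow> (real^'n \<Rightarrow> complex)) \<Rightarrow> bool" where
  "l2_onb e \<longleftrightarrow>
     (\<forall>k. sq_int (e k)) \<and>
     (\<forall>i j. l2_inner (e i) (e j) = (if i = j then 1 else 0)) \<and>
     (\<forall>f. sq_int f \<longrightarrow> (\<forall>k. l2_inner (e k) f = 0) \<longrightarrow> (AE x in lborel. f x = 0))"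

definition l2_positive_trace_class :: "((real^'n \<Rightarrow> complex) \<Rightarrow> (real^'n \<Rightarrow> complex)) \<Rightarrow> bool" where
  "l2_positive_trace_class T \<longleftrightarrow>
     l2_bounded_operator T \<and> l2_positive T \<and>
     (\<exists>e. l2_onb e \<and> summable (\<lambda>k. Re (l2_inner (e k) (T (e k)))))"

definition quantum_state :: "((real^'n \<Rightarrow> complex) \<Rightarrow> (real^'n \<Rightarrow> complex)) \<Rightarrow> bool" where
  "quantum_state \<rho> \<longleftrightarrow> l2_positive_trace_class \<rho>"

definition displace :: "(real^'n) \<times> (real^'n) \<Rightarrow> (real^'n \<Rightarrow> complex) \<Rightarrow> real^'n \<Rightarrow> complex" where
  "displace \<xi> \<phi> y =
     exp (\<i> * complex_of_real ((y - (1/2) *\<^sub>R fst \<xi>) \<bullet> snd \<xi>)) * \<phi> (y - fst \<xi>)"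

text \<open>M_\<rho>(\<alpha>,\<beta>) = <\<chi>_\<alpha> | \<rho> | \<chi>_\<beta>>, a function on R^{4n} = (R^n \<times> R^n) \<times> (R^n \<times> R^n).\<close>
definition matrix_elem ::
  "((real^'n \<Rightarrow> complex) \<Rightarrow> (real^'n \<Rightarrow> complex)) \<Rightarrow> (real^'n \<Rightarrow> complex)
    \<Rightarrow> ((real^'n) \<times> (real^'n)) \<times> ((real^'n) \<times> (real^'n)) \<Rightarrow> complex" where
  "matrix_elem \<rho> chi = (\<lambda>(\<alpha>, \<beta>). l2_inner (displace \<alpha> chi) (\<rho> (displace \<beta> chi)))"

end

theory Submission
  imports Defs "HOL-Probability.Sinc_Integral" "HOL-Probability.Characteristic_Functions"
begin

section \<open>Polynomial weights and rapid decay\<close>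

definition poly_weight :: "nat \<Rightarrow> 'a::real_normed_vector \<Rightarrow> real" where
  "poly_weight N y = inverse ((1 + norm y) ^ N)"

definition rapid_decay :: "('a::real_normed_vector \<Rightarrow> 'b::real_normed_vector) \<Rightarrow> bool" where
  "rapid_decay F \<longleftrightarrow> (\<forall>N. \<exists>C. \<forall>z. norm (F z) \<le> C * poly_weight N z)"

definition poly_bounded :: "('a::real_normed_vector \<Rightarrow> 'b::real_normed_vector) \<Rightarrow> bool" where
  "poly_bounded F \<longleftrightarrow> (\<exists>C N. \<forall>z. norm (F z) \<le> C * (1 + norm z) ^ N)"

lemma poly_weight_pos: "0 < poly_weight N y"
  by (simp add: poly_weight_def add_pos_nonneg)

lemma poly_weight_nonneg: "0 \<le> poly_weight N y"
  using poly_weight_pos[of N y] by simp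

lemma poly_weight_le_1: "poly_weight N y \<le> 1"
  unfolding poly_weight_def using le_imp_inverse_le[of 1 "(1 + norm y) ^ N"] by simp

lemma poly_weight_mult: "(1 + norm y) ^ k * poly_weight (k + N) y = poly_weight N y"
proof -
  have "1 + norm y > 0" by (simp add: add_pos_nonneg)
  then show ?thesis unfolding poly_weight_def by (simp add: power_add field_simps)
qed

lemma poly_weight_shift: "poly_weight N (y - s) \<le> (1 + norm s) ^ N * poly_weight N y"
proof -
  have pos: "1 + norm y > 0" "1 + norm (y - s) > 0" "1 + norm s > 0" by (auto simp: add_pos_nonneg)
  have "norm y \<le> norm (y - s) + norm s" by (metis norm_triangle_sub add.commute)
  then have "1 + norm y \<le> (1 + norm (y - s)) * (1 + norm s)"
    by (simp add: algebra_simps) (smt (verit) mult_nonneg_nonneg norm_ge_zero)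
  then have "(1 + norm y) ^ N \<le> (1 + norm (y - s)) ^ N * (1 + norm s) ^ N"
    unfolding power_mult_distrib[symmetric] using pos by (intro power_mono) auto
  then show ?thesis using pos unfolding poly_weight_def by (simp add: field_simps)
qed

lemma poly_weight_shift_le_1:
  assumes "norm s \<le> 1"
  shows "poly_weight N (y - s) \<le> 2 ^ N * poly_weight N y"
proof -
  have "(1 + norm s) ^ N \<le> 2 ^ N" using assms by (intro power_mono) auto
  then show ?thesis
    using poly_weight_shift[of N y s] poly_weight_nonneg[of N y] by (meson mult_right_mono order_trans)
qed

lemma poly_weight_continuous: "continuous_on UNIV (poly_weight N :: 'a::real_normed_vector \<Rightarrow> real)"
proof -
  have "\<And>y::'a. 1 + norm y \<noteq> 0" by (metis add_pos_nonneg norm_ge_zero zero_less_one less_irrefl)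
  then show ?thesis unfolding poly_weight_def by (intro continuous_intros) auto
qed

lemma weighted_bound_nonneg: "(\<And>y. norm (f y) \<le> C * poly_weight N y) \<Longrightarrow> 0 \<le> C"
  by (metis norm_ge_zero order_trans poly_weight_pos zero_le_mult_iff not_le)

lemma poly_bound_nonneg: "(\<And>z. norm (f z) \<le> C * (1 + norm z) ^ N) \<Longrightarrow> 0 \<le> C"
  by (metis norm_ge_zero norm_zero add_0_right power_one mult_1_right order_trans)

lemma monomial_abs_le: "\<bar>monomial a (z::'a::euclidean_space)\<bar> \<le> (1 + norm z) ^ (\<Sum>b\<in>Basis. a b)"
proof -
  have "\<bar>monomial a z\<bar> = (\<Prod>b\<in>Basis. \<bar>z \<bullet> b\<bar> ^ a b)"
    by (simp add: monomial_def abs_prod power_abs)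
  also have "\<dots> \<le> (\<Prod>b\<in>Basis. (1 + norm z) ^ a b)"
    by (intro prod_mono conjI power_mono) (auto simp: Basis_le_norm add_increasing)
  also have "\<dots> = (1 + norm z) ^ (\<Sum>b\<in>Basis. a b)"
    by (simp add: power_sum)
  finally show ?thesis .
qed

lemma monomial_single: "b \<in> Basis \<Longrightarrow> monomial (\<lambda>c. if c = b then N else 0) z = (z \<bullet> b) ^ N"
  unfolding monomial_def by (simp add: if_distrib cong: if_cong)

lemma one_plus_power_le: "(x::real) \<ge> 0 \<Longrightarrow> (1 + x) ^ N \<le> 2 ^ N * (1 + x ^ N)"
proof (cases "x \<le> 1")
  case True
  assume x: "x \<ge> 0"
  then have "(1 + x) ^ N \<le> 2 ^ N" using True by (intro power_mono) auto
  moreover have "(2::real) ^ N \<le> 2 ^ N * (1 + x ^ N)" using x by simp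
  ultimately show ?thesis by linarith
next
  case False
  then have "(1 + x) ^ N \<le> (2 * x) ^ N" by (intro power_mono) auto
  moreover have "(2 * x) ^ N \<le> 2 ^ N * (1 + x ^ N)" using False by (simp add: power_mult_distrib)
  ultimately show ?thesis by linarith
qed

lemma norm_power_le_sum_coord_powers:
  "norm (z::'a::euclidean_space) ^ N \<le> real DIM('a) ^ N * (\<Sum>b\<in>Basis. \<bar>z \<bullet> b\<bar> ^ N)"
proof -
  obtain b0 where b0: "b0 \<in> Basis" "\<And>b. b \<in> Basis \<Longrightarrow> \<bar>z \<bullet> b\<bar> \<le> \<bar>z \<bullet> b0\<bar>"
    using Max_in[of "(\<lambda>b. \<bar>z \<bullet> b\<bar>) ` Basis"] Max_ge[of "(\<lambda>b. \<bar>z \<bullet> b\<bar>) ` Basis"] by fastforce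
  have "norm z \<le> (\<Sum>b\<in>Basis. \<bar>z \<bullet> b\<bar>)" by (rule norm_le_l1)
  also have "\<dots> \<le> (\<Sum>b\<in>(Basis::'a set). \<bar>z \<bullet> b0\<bar>)" by (intro sum_mono b0)
  finally have "norm z ^ N \<le> (real DIM('a) * \<bar>z \<bullet> b0\<bar>) ^ N" by (intro power_mono) auto
  also have "\<dots> \<le> real DIM('a) ^ N * (\<Sum>b\<in>Basis. \<bar>z \<bullet> b\<bar> ^ N)"
    unfolding power_mult_distrib by (intro mult_left_mono member_le_sum) (auto simp: b0)
  finally show ?thesis .
qed

lemma rapid_decay_imp_monomial_bounded:
  fixes F :: "'a::euclidean_space \<Rightarrow> complex"
  assumes "rapid_decay F"
  shows "\<exists>C. \<forall>z. norm (complex_of_real (monomial a z) * F z) \<le> C"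
proof -
  let ?N = "\<Sum>b\<in>Basis. a b"
  obtain C where C: "\<And>z. norm (F z) \<le> C * poly_weight ?N z"
    using assms unfolding rapid_decay_def by blast
  have "norm (complex_of_real (monomial a z) * F z) \<le> C" for z
  proof -
    have "norm (complex_of_real (monomial a z) * F z) = \<bar>monomial a z\<bar> * norm (F z)"
      by (simp add: norm_mult)
    also have "\<dots> \<le> (1 + norm z) ^ ?N * (C * poly_weight (?N + 0) z)"
      by (intro mult_mono monomial_abs_le) (use C in auto)
    also have "\<dots> = C * ((1 + norm z) ^ ?N * poly_weight (?N + 0) z)" by (simp only: mult_ac)
    also have "\<dots> = C" unfolding poly_weight_mult by (simp add: poly_weight_def)
    finally show ?thesis .
  qed
  then show ?thesis by blast
qed

lemma monomial_bounded_imp_rapid_decay: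
  fixes F :: "'a::euclidean_space \<Rightarrow> complex"
  assumes mono: "\<And>a. \<exists>C. \<forall>z. norm (complex_of_real (monomial a z) * F z) \<le> C"
  shows "rapid_decay F"
  unfolding rapid_decay_def
proof
  fix N
  obtain C0 where C0: "\<And>z. norm (F z) \<le> C0"
    using mono[of "\<lambda>_. 0"] by (auto simp: monomial_def)
  have "\<forall>b\<in>Basis. \<exists>C. \<forall>z. \<bar>z \<bullet> b\<bar> ^ N * norm (F z) \<le> C"
  proof
    fix b :: 'a assume b: "b \<in> Basis"
    obtain C where "\<And>z. norm (complex_of_real (monomial (\<lambda>c. if c = b then N else 0) z) * F z) \<le> C"
      using mono by metis
    then show "\<exists>C. \<forall>z. \<bar>z \<bullet> b\<bar> ^ N * norm (F z) \<le> C"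
      using b by (auto simp: monomial_single norm_mult power_abs norm_power)
  qed
  then obtain Cb where Cb: "\<And>b z. b \<in> Basis \<Longrightarrow> \<bar>z \<bullet> b\<bar> ^ N * norm (F z) \<le> Cb b"
    by metis
  define C1 where "C1 = (\<Sum>b\<in>Basis. Cb b)"
  show "\<exists>C. \<forall>z. norm (F z) \<le> C * poly_weight N z"
  proof (intro exI allI)
    fix z :: 'a
    have "norm z ^ N * norm (F z) \<le> real DIM('a) ^ N * (\<Sum>b\<in>Basis. \<bar>z \<bullet> b\<bar> ^ N * norm (F z))"
      using mult_right_mono[OF norm_power_le_sum_coord_powers[of z N] norm_ge_zero[of "F z"]]
      by (simp add: sum_distrib_right mult.assoc)
    also have "\<dots> \<le> real DIM('a) ^ N * C1"
      unfolding C1_def by (intro mult_left_mono sum_mono Cb) auto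
    finally have zF: "norm z ^ N * norm (F z) \<le> real DIM('a) ^ N * C1" .
    have "(1 + norm z) ^ N * norm (F z) \<le> 2 ^ N * (1 + norm z ^ N) * norm (F z)"
      by (intro mult_right_mono one_plus_power_le) auto
    also have "\<dots> = 2 ^ N * (norm (F z) + norm z ^ N * norm (F z))"
      by (simp add: algebra_simps)
    also have "\<dots> \<le> 2 ^ N * (C0 + real DIM('a) ^ N * C1)"
      using C0[of z] zF by (intro mult_left_mono) auto
    finally have "(1 + norm z) ^ N * norm (F z) \<le> 2 ^ N * (C0 + real DIM('a) ^ N * C1)" .
    then show "norm (F z) \<le> 2 ^ N * (C0 + real DIM('a) ^ N * C1) * poly_weight N z"
      unfolding poly_weight_def by (simp add: field_simps add_pos_nonneg)
  qed
qed

lemma rapidly_decaying_iff_rapid_decay: "rapidly_decaying F \<longleftrightarrow> rapid_decay F"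
  unfolding rapidly_decaying_def
  using rapid_decay_imp_monomial_bounded monomial_bounded_imp_rapid_decay by metis

lemma rapid_decay_add: "rapid_decay f \<Longrightarrow> rapid_decay g \<Longrightarrow> rapid_decay (\<lambda>y. f y + g y)"
  unfolding rapid_decay_def
proof
  fix N assume "\<forall>N. \<exists>C. \<forall>z. norm (f z) \<le> C * poly_weight N z" "\<forall>N. \<exists>C. \<forall>z. norm (g z) \<le> C * poly_weight N z"
  then obtain C1 C2 where "\<And>z. norm (f z) \<le> C1 * poly_weight N z" "\<And>z. norm (g z) \<le> C2 * poly_weight N z"
    by metis
  then show "\<exists>C. \<forall>z. norm (f z + g z) \<le> C * poly_weight N z"
    by (intro exI[of _ "C1 + C2"] allI) (smt (verit) norm_triangle_ineq distrib_right)
qed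

lemma rapid_decay_cmult:
  fixes f :: "'a::real_normed_vector \<Rightarrow> 'b::real_normed_div_algebra"
  shows "rapid_decay f \<Longrightarrow> rapid_decay (\<lambda>y. c * f y)"
  unfolding rapid_decay_def
  by (metis (no_types, opaque_lifting) mult.assoc mult_left_mono norm_ge_zero norm_mult)

lemma rapid_decay_zero: "rapid_decay (\<lambda>y. 0)"
  unfolding rapid_decay_def by (auto intro: exI[of _ 0])

lemma rapid_decay_sum:
  "finite I \<Longrightarrow> (\<And>i. i \<in> I \<Longrightarrow> rapid_decay (f i)) \<Longrightarrow> rapid_decay (\<lambda>y. \<Sum>i\<in>I. f i y)"
  by (induction I rule: finite_induct) (auto intro: rapid_decay_add rapid_decay_zero)

lemma abs_inner_le_poly: "\<bar>z \<bullet> w\<bar> \<le> norm w * (1 + norm z)"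
proof -
  have "\<bar>z \<bullet> w\<bar> \<le> norm z * norm w" by (rule Cauchy_Schwarz_ineq2)
  also have "\<dots> \<le> (1 + norm z) * norm w" by (intro mult_right_mono) auto
  finally show ?thesis by (simp add: mult.commute)
qed

lemma rapid_decay_coord_mult:
  "rapid_decay f \<Longrightarrow> rapid_decay (\<lambda>y. complex_of_real (y \<bullet> w) * f y)"
  unfolding rapid_decay_def
proof
  fix N assume "\<forall>N. \<exists>C. \<forall>z. norm (f z) \<le> C * poly_weight N z"
  then obtain C where C: "\<And>z. norm (f z) \<le> C * poly_weight (1 + N) z" by metis
  have "norm (complex_of_real (z \<bullet> w) * f z) \<le> (norm w * C) * poly_weight N z" for z
  proof -
    have "norm (complex_of_real (z \<bullet> w) * f z) \<le> (norm w * (1 + norm z)) * (C * poly_weight (1 + N) z)"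
      unfolding norm_mult norm_of_real by (intro mult_mono abs_inner_le_poly C) auto
    also have "\<dots> = norm w * C * ((1 + norm z) ^ 1 * poly_weight (1 + N) z)" by (simp add: mult_ac)
    finally show ?thesis unfolding poly_weight_mult .
  qed
  then show "\<exists>C. \<forall>z. norm (complex_of_real (z \<bullet> w) * f z) \<le> C * poly_weight N z" by blast
qed

lemma poly_bounded_add:
  fixes f g :: "'a::real_normed_vector \<Rightarrow> 'b::real_normed_vector"
  assumes "poly_bounded f" "poly_bounded g"
  shows "poly_bounded (\<lambda>z. f z + g z)"
proof -
  obtain C1 N1 where C1: "\<And>z. norm (f z) \<le> C1 * (1 + norm z) ^ N1"
    using assms(1) unfolding poly_bounded_def by blast
  obtain C2 N2 where C2: "\<And>z. norm (g z) \<le> C2 * (1 + norm z) ^ N2"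
    using assms(2) unfolding poly_bounded_def by blast
  have le: "C * (1 + norm z) ^ N \<le> C * (1 + norm z) ^ (N1 + N2)" if "0 \<le> C" "N \<le> N1 + N2" for C N and z :: 'a
    using that by (intro mult_left_mono power_increasing) auto
  have "norm (f z + g z) \<le> (C1 + C2) * (1 + norm z) ^ (N1 + N2)" for z
    using norm_triangle_ineq[of "f z" "g z"] C1[of z] C2[of z]
      le[OF poly_bound_nonneg[OF C1], of N1 z] le[OF poly_bound_nonneg[OF C2], of N2 z]
    by (simp add: distrib_right)
  then show ?thesis unfolding poly_bounded_def by blast
qed

lemma poly_bounded_cmult:
  fixes f :: "'a::real_normed_vector \<Rightarrow> 'b::real_normed_div_algebra"
  shows "poly_bounded f \<Longrightarrow> poly_bounded (\<lambda>z. c * f z)"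
  unfolding poly_bounded_def
  by (metis (no_types, opaque_lifting) mult.assoc mult_left_mono norm_ge_zero norm_mult)

lemma poly_bounded_coord_mult:
  fixes f :: "'a::real_inner \<Rightarrow> complex"
  assumes "poly_bounded f"
  shows "poly_bounded (\<lambda>z. complex_of_real (z \<bullet> w) * f z)"
proof -
  obtain C N where C: "\<And>z. norm (f z) \<le> C * (1 + norm z) ^ N"
    using assms unfolding poly_bounded_def by blast
  have "norm (complex_of_real (z \<bullet> w) * f z) \<le> (norm w * C) * (1 + norm z) ^ Suc N" for z
  proof -
    have "norm (complex_of_real (z \<bullet> w) * f z) \<le> (norm w * (1 + norm z)) * (C * (1 + norm z) ^ N)"
      unfolding norm_mult norm_of_real by (intro mult_mono abs_inner_le_poly C) auto
    then show ?thesis by (simp add: mult_ac)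
  qed
  then show ?thesis unfolding poly_bounded_def by blast
qed

lemma poly_bounded_const: "poly_bounded (\<lambda>z. c)"
  unfolding poly_bounded_def by (rule exI[of _ "norm c"], rule exI[of _ 0]) simp

section \<open>Interpolation between decay and growth\<close>

lemma norm_diff_le_vector_derivative_bound:
  fixes a :: "real \<Rightarrow> 'b::real_normed_vector"
  assumes t: "0 \<le> t"
    and a: "\<And>s. s \<in> {0..t} \<Longrightarrow> (a has_vector_derivative a' s) (at s)"
    and B: "\<And>s. s \<in> {0..t} \<Longrightarrow> norm (a' s) \<le> B"
  shows "norm (a t - a 0) \<le> B * t"
proof -
  have "norm (a t - a 0) \<le> B * norm (t - 0)"
  proof (rule differentiable_bound[of "{0..t}" a "\<lambda>s r. r *\<^sub>R a' s"])
    show "(a has_derivative (\<lambda>r. r *\<^sub>R a' s)) (at s within {0..t})" if "s \<in> {0..t}" for s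
      using a[OF that] by (simp add: has_vector_derivative_def has_derivative_at_withinI)
    show "onorm (\<lambda>r. r *\<^sub>R a' s) \<le> B" if "s \<in> {0..t}" for s
      using B[OF that] by (simp add: onorm_scaleR_left onorm_id)
  qed (use t in auto)
  then show ?thesis using t by simp
qed

lemma taylor_second_order_bound:
  fixes a :: "real \<Rightarrow> 'b::real_normed_vector"
  assumes t: "0 \<le> t"
    and a: "\<And>s. s \<in> {0..t} \<Longrightarrow> (a has_vector_derivative a' s) (at s)"
    and a': "\<And>s. s \<in> {0..t} \<Longrightarrow> (a' has_vector_derivative a'' s) (at s)"
    and B: "\<And>s. s \<in> {0..t} \<Longrightarrow> norm (a'' s) \<le> B"
  shows "norm (a t - a 0 - t *\<^sub>R a' 0) \<le> B * t\<^sup>2"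
proof -
  have B0: "0 \<le> B" using B[of 0] t by (meson atLeastAtMost_iff norm_ge_zero order_trans order_refl)
  have "norm (a' s - a' 0) \<le> B * t" if "s \<in> {0..t}" for s
  proof -
    have "norm (a' s - a' 0) \<le> B * s"
      by (rule norm_diff_le_vector_derivative_bound[of s a' a'']) (use that a' B in auto)
    also have "\<dots> \<le> B * t" using that B0 by (intro mult_left_mono) auto
    finally show ?thesis .
  qed
  then have "norm (a t - a 0 - (t - 0) *\<^sub>R a' 0) \<le> norm (t - 0) * (B * t)"
    by (intro vector_differentiable_bound_linearization[of "{0..t}" a a'])
       (use a t in \<open>auto simp: has_vector_derivative_at_within closed_segment_eq_real_ivl\<close>)
  then show ?thesis using t by (simp add: power2_eq_square mult_ac)
qed

lemma has_vector_derivative_along_line: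
  assumes "(f has_derivative f') (at (z + t *\<^sub>R v))"
  shows "((\<lambda>t. f (z + t *\<^sub>R v)) has_vector_derivative f' v) (at t)"
proof -
  have "((f \<circ> (\<lambda>t. z + t *\<^sub>R v)) has_derivative (f' \<circ> (\<lambda>r. r *\<^sub>R v))) (at t)"
    by (intro diff_chain_at assms) (auto intro!: derivative_eq_intros)
  moreover have "linear f'" using assms has_derivative_linear by blast
  ultimately show ?thesis
    unfolding has_vector_derivative_def by (simp add: o_def linear.scaleR)
qed

lemma norm_derivative_le_by_taylor:
  fixes a :: "real \<Rightarrow> 'b::real_normed_vector"
  assumes t: "0 \<le> t"
    and a: "\<And>s. s \<in> {0..t} \<Longrightarrow> (a has_vector_derivative a' s) (at s)"
    and a': "\<And>s. s \<in> {0..t} \<Longrightarrow> (a' has_vector_derivative a'' s) (at s)"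
    and B: "\<And>s. s \<in> {0..t} \<Longrightarrow> norm (a'' s) \<le> B"
  shows "t * norm (a' 0) \<le> norm (a t) + norm (a 0) + B * t\<^sup>2"
proof -
  have "t * norm (a' 0) \<le> norm (a t - a 0) + norm (a t - a 0 - t *\<^sub>R a' 0)"
    using norm_triangle_ineq4[of "a t - a 0" "a t - a 0 - t *\<^sub>R a' 0"] t by simp
  then show ?thesis
    using taylor_second_order_bound[OF t a a' B] norm_triangle_ineq4[of "a t" "a 0"] by linarith
qed

lemma one_plus_norm_power_shift_le:
  assumes "norm s \<le> 1"
  shows "(1 + norm (z + s)) ^ N \<le> 2 ^ N * (1 + norm z) ^ N"
proof -
  have "1 + norm (z + s) \<le> 2 * (1 + norm z)"
    using norm_triangle_ineq[of z s] norm_ge_zero[of z] assms unfolding distrib_left by linarith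
  then show ?thesis unfolding power_mult_distrib[symmetric] by (intro power_mono) auto
qed

lemma rapid_decay_directional_derivative:
  fixes G :: "'a::real_normed_vector \<Rightarrow> 'b::real_normed_vector"
  assumes v: "norm v \<le> 1"
    and G': "\<And>z. (G has_derivative G' z) (at z)"
    and G'': "\<And>z. ((\<lambda>z. G' z v) has_derivative G'' z) (at z)"
    and decay: "rapid_decay G" and growth: "poly_bounded (\<lambda>z. G'' z v)"
  shows "rapid_decay (\<lambda>z. G' z v)"
  unfolding rapid_decay_def
proof
  fix P
  obtain C2 N2 where C2: "\<And>z. norm (G'' z v) \<le> C2 * (1 + norm z) ^ N2"
    using growth unfolding poly_bounded_def by blast
  have C2_nonneg: "0 \<le> C2" using C2 by (rule poly_bound_nonneg)
  define K where "K = (N2 + P) + P"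
  obtain CK where CK: "\<And>z. norm (G z) \<le> CK * poly_weight K z"
    using decay unfolding rapid_decay_def by blast
  have CK_nonneg: "0 \<le> CK" using CK by (rule weighted_bound_nonneg)
  show "\<exists>C. \<forall>z. norm (G' z v) \<le> C * poly_weight P z"
  proof (intro exI allI)
    fix z :: 'a
    define h where "h = poly_weight (N2 + P) z"
    have h: "0 < h" "h \<le> 1" unfolding h_def by (auto simp: poly_weight_pos poly_weight_le_1)
    have hv: "norm (t *\<^sub>R v) \<le> 1" if "t \<in> {0..h}" for t
      using that h v by (auto simp: mult_le_one)
    have T: "h * norm (G' (z + 0 *\<^sub>R v) v) \<le> norm (G (z + h *\<^sub>R v)) + norm (G (z + 0 *\<^sub>R v))
        + (C2 * (2 ^ N2 * (1 + norm z) ^ N2)) * h\<^sup>2"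
    proof (rule norm_derivative_le_by_taylor[where a'="\<lambda>t. G' (z + t *\<^sub>R v) v"])
      show "((\<lambda>t. G (z + t *\<^sub>R v)) has_vector_derivative G' (z + t *\<^sub>R v) v) (at t)" for t
        by (rule has_vector_derivative_along_line[OF G'])
      show "((\<lambda>t. G' (z + t *\<^sub>R v) v) has_vector_derivative G'' (z + t *\<^sub>R v) v) (at t)" for t
        using has_vector_derivative_along_line[OF G''] by simp
      show "norm (G'' (z + t *\<^sub>R v) v) \<le> C2 * (2 ^ N2 * (1 + norm z) ^ N2)" if "t \<in> {0..h}" for t
        using C2[of "z + t *\<^sub>R v"] mult_left_mono[OF one_plus_norm_power_shift_le[OF hv[OF that], of z N2] C2_nonneg]
        by linarith
    qed (use h in auto)
    have Gh: "norm (G (z + h *\<^sub>R v)) \<le> 2 ^ K * CK * poly_weight K z"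
    proof -
      have "norm (- (h *\<^sub>R v)) \<le> 1" using h v by (simp add: mult_le_one)
      from poly_weight_shift_le_1[OF this, of K z]
      have "CK * poly_weight K (z + h *\<^sub>R v) \<le> CK * (2 ^ K * poly_weight K z)"
        using CK_nonneg by (intro mult_left_mono) simp_all
      then show ?thesis using CK[of "z + h *\<^sub>R v"] by (simp add: mult_ac)
    qed
    have wK: "poly_weight K z = h * poly_weight P z"
      unfolding h_def K_def poly_weight_def by (simp add: power_add)
    have e: "C2 * (2 ^ N2 * (1 + norm z) ^ N2) * h\<^sup>2 = h * (C2 * 2 ^ N2 * poly_weight P z)"
    proof -
      have "h * (1 + norm z) ^ N2 = poly_weight P z"
        unfolding h_def using poly_weight_mult[of z N2 P] by (simp add: mult_ac)
      then show ?thesis by (simp add: power2_eq_square mult_ac)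
    qed
    have "h * norm (G' z v) \<le> 2 ^ K * CK * poly_weight K z + CK * poly_weight K z
        + h * (C2 * 2 ^ N2 * poly_weight P z)"
      using T Gh CK[of z] e by simp
    also have "\<dots> = h * (((2 ^ K + 1) * CK + C2 * 2 ^ N2) * poly_weight P z)"
      unfolding wK by (simp add: algebra_simps)
    finally show "norm (G' z v) \<le> ((2 ^ K + 1) * CK + C2 * 2 ^ N2) * poly_weight P z"
      using h by simp
  qed
qed

section \<open>Schwartz functions\<close>

definition smooth :: "('a::euclidean_space \<Rightarrow> complex) \<Rightarrow> bool" where
  "smooth F \<longleftrightarrow> (\<forall>vs. set vs \<subseteq> Basis \<longrightarrow> (\<forall>z. iter_partial vs F differentiable (at z)))"

lemma iter_partial_append: "iter_partial (vs @ ws) F = iter_partial vs (iter_partial ws F)"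
  by (induction vs) auto

lemma schwartz_iff_rapid_decay:
  "schwartz F \<longleftrightarrow> smooth F \<and> (\<forall>vs. set vs \<subseteq> Basis \<longrightarrow> rapid_decay (iter_partial vs F))"
  unfolding schwartz_def smooth_def
  using rapid_decay_imp_monomial_bounded monomial_bounded_imp_rapid_decay by metis

lemma schwartz_imp_smooth: "schwartz F \<Longrightarrow> smooth F"
  by (simp add: schwartz_iff_rapid_decay)

lemma schwartz_rapid_decay: "schwartz F \<Longrightarrow> set vs \<subseteq> Basis \<Longrightarrow> rapid_decay (iter_partial vs F)"
  by (simp add: schwartz_iff_rapid_decay)

lemma schwartz_differentiable: "schwartz F \<Longrightarrow> F differentiable (at y)"
  using schwartz_imp_smooth[of F] unfolding smooth_def by (metis empty_subsetI iter_partial.simps(1) list.set(1))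

lemma schwartz_has_derivative: "schwartz F \<Longrightarrow> (F has_derivative frechet_derivative F (at y)) (at y)"
  using schwartz_differentiable frechet_derivative_works by blast

lemma schwartz_continuous: "schwartz F \<Longrightarrow> continuous_on UNIV F"
  by (intro differentiable_imp_continuous_on differentiable_at_imp_differentiable_on schwartz_differentiable)

lemma schwartz_partial:
  assumes "schwartz F" "e \<in> Basis"
  shows "schwartz (iter_partial [e] F)"
proof -
  have "iter_partial vs (iter_partial [e] F) = iter_partial (vs @ [e]) F" for vs
    by (simp only: iter_partial_append)
  moreover have "set vs \<subseteq> Basis \<Longrightarrow> set (vs @ [e]) \<subseteq> Basis" for vs using assms(2) by auto
  ultimately show ?thesis using assms(1) unfolding schwartz_iff_rapid_decay smooth_def by metis
qed

definition coord_mult :: "'a::euclidean_space \<Rightarrow> ('a \<Rightarrow> complex) \<Rightarrow> 'a \<Rightarrow> complex" where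
  "coord_mult e F y = complex_of_real (y \<bullet> e) * F y"

definition remove_nth :: "nat \<Rightarrow> 'b list \<Rightarrow> 'b list" where
  "remove_nth i vs = take i vs @ drop (Suc i) vs"

lemma set_remove_nth: "set (remove_nth i vs) \<subseteq> set vs"
  unfolding remove_nth_def by (auto dest: in_set_takeD in_set_dropD)

lemma has_derivative_coord:
  "((\<lambda>y. complex_of_real (y \<bullet> e)) has_derivative (\<lambda>h. complex_of_real (h \<bullet> e))) (at z)"
  by (intro has_derivative_of_real has_derivative_inner_left has_derivative_ident)

lemma iter_partial_coord_mult:
  assumes F: "smooth F" and vs: "set vs \<subseteq> Basis"
  shows "iter_partial vs (coord_mult e F) y =
    complex_of_real (y \<bullet> e) * iter_partial vs F y +
    (\<Sum>i<length vs. complex_of_real (vs ! i \<bullet> e) * iter_partial (remove_nth i vs) F y)"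
  using vs
proof (induction vs arbitrary: y)
  case Nil
  then show ?case by (simp add: coord_mult_def)
next
  case (Cons v vs)
  then have v: "v \<in> Basis" and vs: "set vs \<subseteq> Basis" by auto
  have D: "(iter_partial ws F has_derivative frechet_derivative (iter_partial ws F) (at z)) (at z)"
    if "set ws \<subseteq> Basis" for ws z
    using F that unfolding smooth_def using frechet_derivative_works by blast
  have "set (remove_nth i vs) \<subseteq> Basis" for i using set_remove_nth[of i vs] vs by blast
  then have "((\<lambda>y. complex_of_real (y \<bullet> e) * iter_partial vs F y +
      (\<Sum>i<length vs. complex_of_real (vs ! i \<bullet> e) * iter_partial (remove_nth i vs) F y))
     has_derivative (\<lambda>h. (complex_of_real (y \<bullet> e) * frechet_derivative (iter_partial vs F) (at y) h +
        complex_of_real (h \<bullet> e) * iter_partial vs F y) +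
      (\<Sum>i<length vs. complex_of_real (vs ! i \<bullet> e) *
        frechet_derivative (iter_partial (remove_nth i vs) F) (at y) h))) (at y)"
    by (intro has_derivative_add has_derivative_mult has_derivative_coord D vs has_derivative_sum
        has_derivative_mult_right)
  moreover have "iter_partial vs (coord_mult e F) = (\<lambda>y. complex_of_real (y \<bullet> e) * iter_partial vs F y +
      (\<Sum>i<length vs. complex_of_real (vs ! i \<bullet> e) * iter_partial (remove_nth i vs) F y))"
    using Cons.IH[OF vs] by blast
  ultimately show ?case
    by (simp add: frechet_derivative_at[symmetric] sum.lessThan_Suc_shift remove_nth_def
        del: sum.lessThan_Suc)
qed

lemma schwartz_coord_mult:
  assumes F: "schwartz F" and e: "e \<in> Basis"
  shows "schwartz (coord_mult e F)"
  unfolding schwartz_iff_rapid_decay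
proof (intro conjI allI impI)
  have sm: "smooth F" using F by (rule schwartz_imp_smooth)
  fix vs assume vs: "set vs \<subseteq> (Basis::'a set)"
  have rem: "set (remove_nth i vs) \<subseteq> Basis" for i using set_remove_nth[of i vs] vs by blast
  have eq: "iter_partial vs (coord_mult e F) = (\<lambda>y. complex_of_real (y \<bullet> e) * iter_partial vs F y +
    (\<Sum>i<length vs. complex_of_real (vs ! i \<bullet> e) * iter_partial (remove_nth i vs) F y))"
    using iter_partial_coord_mult[OF sm vs] by blast
  show "rapid_decay (iter_partial vs (coord_mult e F))"
    unfolding eq
    by (intro rapid_decay_add rapid_decay_coord_mult schwartz_rapid_decay[OF F] vs rapid_decay_sum
        rapid_decay_cmult rem) auto
next
  have D: "iter_partial ws F differentiable (at z)" if "set ws \<subseteq> Basis" for ws z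
    using F that unfolding schwartz_def by blast
  have sm: "smooth F" using F by (rule schwartz_imp_smooth)
  show "smooth (coord_mult e F)" unfolding smooth_def
  proof (intro allI impI)
    fix vs z assume vs: "set vs \<subseteq> (Basis::'a set)"
    have rem: "set (remove_nth i vs) \<subseteq> Basis" for i using set_remove_nth[of i vs] vs by blast
    have eq: "iter_partial vs (coord_mult e F) = (\<lambda>y. complex_of_real (y \<bullet> e) * iter_partial vs F y +
      (\<Sum>i<length vs. complex_of_real (vs ! i \<bullet> e) * iter_partial (remove_nth i vs) F y))"
      using iter_partial_coord_mult[OF sm vs] by blast
    have "(\<lambda>y. complex_of_real (y \<bullet> e)) differentiable (at z)"
      using has_derivative_coord unfolding differentiable_def by blast
    then show "iter_partial vs (coord_mult e F) differentiable (at z)"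
      unfolding eq by (intro differentiable_add differentiable_mult differentiable_sum
          differentiable_const D vs rem ballI finite_lessThan)
  qed
qed

lemma schwartz_of_derivative_closed_class:
  fixes S :: "('a::euclidean_space \<Rightarrow> complex) set"
  assumes deriv: "\<And>A. A \<in> S \<Longrightarrow> \<exists>A'. (\<forall>z. (A has_derivative A' z) (at z)) \<and> (\<forall>v. (\<lambda>z. A' z v) \<in> S)"
    and growth: "\<And>A. A \<in> S \<Longrightarrow> poly_bounded A"
    and F: "F \<in> S" "rapid_decay F"
  shows "schwartz F"
proof -
  have D: "(A has_derivative frechet_derivative A (at z)) (at z)" "(\<lambda>z. frechet_derivative A (at z) v) \<in> S"
    if A: "A \<in> S" for A z v
  proof -
    obtain A' where A': "\<And>z. (A has_derivative A' z) (at z)" "\<And>v. (\<lambda>z. A' z v) \<in> S"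
      using deriv[OF A] by blast
    have "frechet_derivative A (at z) = A' z" for z using A'(1) by (rule frechet_derivative_at[symmetric])
    then show "(A has_derivative frechet_derivative A (at z)) (at z)" "(\<lambda>z. frechet_derivative A (at z) v) \<in> S"
      using A' by simp_all
  qed
  have mem: "iter_partial vs F \<in> S" for vs
    by (induction vs) (simp_all add: F D)
  have "rapid_decay (iter_partial vs F)" if "set vs \<subseteq> Basis" for vs
    using that
  proof (induction vs)
    case (Cons v vs)
    define G where "G = iter_partial vs F"
    have G: "G \<in> S" "(\<lambda>z. frechet_derivative G (at z) v) \<in> S" unfolding G_def using mem D by auto
    have "rapid_decay (\<lambda>z. frechet_derivative G (at z) v)"
    proof (rule rapid_decay_directional_derivative[where G'="\<lambda>z. frechet_derivative G (at z)"
          and G''="\<lambda>z. frechet_derivative (\<lambda>z. frechet_derivative G (at z) v) (at z)"])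
      show "norm v \<le> 1" using Cons.prems by simp
      show "rapid_decay G" unfolding G_def using Cons by simp
      show "poly_bounded (\<lambda>z. frechet_derivative (\<lambda>z. frechet_derivative G (at z) v) (at z) v)"
        using growth D(2)[OF G(2)] by blast
    qed (use D G in simp_all)
    then show ?case unfolding G_def by simp
  qed (simp add: F)
  moreover have "smooth F"
    unfolding smooth_def differentiable_def using mem D(1) by blast
  ultimately show ?thesis unfolding schwartz_iff_rapid_decay by blast
qed

lemma schwartz_weighted_bound:
  assumes "schwartz F"
  obtains C where "0 \<le> C" "\<And>y. norm (F y) \<le> C * poly_weight M y"
proof -
  have "rapid_decay F" using schwartz_rapid_decay[OF assms, of "[]"] by simp
  then obtain C where "\<And>y. norm (F y) \<le> C * poly_weight M y" unfolding rapid_decay_def by blast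
  with weighted_bound_nonneg show thesis using that by blast
qed

lemma frechet_derivative_eq_partials:
  assumes "schwartz F"
  shows "frechet_derivative F (at y) u = (\<Sum>b\<in>Basis. complex_of_real (u \<bullet> b) * iter_partial [b] F y)"
proof -
  have lin: "linear (frechet_derivative F (at y))"
    using schwartz_differentiable[OF assms] by (rule linear_frechet_derivative)
  have "frechet_derivative F (at y) u = frechet_derivative F (at y) (\<Sum>b\<in>Basis. (u \<bullet> b) *\<^sub>R b)"
    by (simp add: euclidean_representation)
  also have "\<dots> = (\<Sum>b\<in>Basis. (u \<bullet> b) *\<^sub>R frechet_derivative F (at y) b)"
    by (simp add: linear_sum[OF lin] linear.scaleR[OF lin])
  finally show ?thesis by (simp add: scaleR_conv_of_real)
qed

lemma schwartz_derivative_bound: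
  fixes F :: "'a::euclidean_space \<Rightarrow> complex"
  assumes F: "schwartz F"
  obtains C where "0 \<le> C" "\<And>y u. norm (frechet_derivative F (at y) u) \<le> C * norm u * poly_weight M y"
proof -
  have "\<forall>b\<in>Basis. \<exists>C\<ge>0. \<forall>y. norm (iter_partial [b] F y) \<le> C * poly_weight M y"
    using schwartz_weighted_bound[OF schwartz_partial[OF F]] by metis
  then obtain C where C0: "\<And>b. b \<in> Basis \<Longrightarrow> 0 \<le> C b"
    and C: "\<And>b y. b \<in> Basis \<Longrightarrow> norm (iter_partial [b] F y) \<le> C b * poly_weight M y"
    by metis
  have "norm (frechet_derivative F (at y) u) \<le> (\<Sum>b\<in>Basis. C b) * norm u * poly_weight M y" for y u
  proof -
    have "norm (frechet_derivative F (at y) u) \<le> (\<Sum>b\<in>Basis. \<bar>u \<bullet> b\<bar> * norm (iter_partial [b] F y))"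
      unfolding frechet_derivative_eq_partials[OF F] by (rule order_trans[OF norm_sum]) (simp add: norm_mult)
    also have "\<dots> \<le> (\<Sum>b\<in>Basis. norm u * (C b * poly_weight M y))"
      by (intro sum_mono mult_mono Basis_le_norm C) auto
    also have "\<dots> = (\<Sum>b\<in>Basis. C b) * norm u * poly_weight M y"
      by (simp add: sum_distrib_left sum_distrib_right mult_ac)
    finally show ?thesis .
  qed
  moreover have "0 \<le> (\<Sum>b\<in>Basis. C b)" using C0 by (simp add: sum_nonneg)
  ultimately show thesis using that by blast
qed

lemma schwartz_directional_derivative_has_derivative:
  assumes F: "schwartz F"
  shows "((\<lambda>z. frechet_derivative F (at z) u) has_derivative
    (\<lambda>w. \<Sum>b\<in>Basis. complex_of_real (u \<bullet> b) * frechet_derivative (iter_partial [b] F) (at y) w)) (at y)"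
  unfolding frechet_derivative_eq_partials[OF F]
  by (intro has_derivative_sum has_derivative_mult_right schwartz_has_derivative schwartz_partial F)

lemma schwartz_second_derivative_bound:
  fixes F :: "'a::euclidean_space \<Rightarrow> complex"
  assumes F: "schwartz F"
  obtains C where "0 \<le> C" "\<And>y u w. norm (\<Sum>b\<in>Basis. complex_of_real (u \<bullet> b) *
      frechet_derivative (iter_partial [b] F) (at y) w) \<le> C * norm u * norm w * poly_weight M y"
proof -
  have "\<forall>b\<in>Basis. \<exists>C\<ge>0. \<forall>y w. norm (frechet_derivative (iter_partial [b] F) (at y) w) \<le> C * norm w * poly_weight M y"
    using schwartz_derivative_bound[OF schwartz_partial[OF F]] by metis
  then obtain Cb where Cb0: "\<And>b. b \<in> Basis \<Longrightarrow> 0 \<le> Cb b"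
    and Cb: "\<And>b y w. b \<in> Basis \<Longrightarrow> norm (frechet_derivative (iter_partial [b] F) (at y) w) \<le> Cb b * norm w * poly_weight M y"
    by metis
  have "norm (\<Sum>b\<in>Basis. complex_of_real (u \<bullet> b) * frechet_derivative (iter_partial [b] F) (at y) w)
      \<le> (\<Sum>b\<in>Basis. Cb b) * norm u * norm w * poly_weight M y" for y u w
  proof -
    have "norm (\<Sum>b\<in>Basis. complex_of_real (u \<bullet> b) * frechet_derivative (iter_partial [b] F) (at y) w)
        \<le> (\<Sum>b\<in>Basis. \<bar>u \<bullet> b\<bar> * norm (frechet_derivative (iter_partial [b] F) (at y) w))"
      by (rule order_trans[OF norm_sum]) (simp add: norm_mult)
    also have "\<dots> \<le> (\<Sum>b\<in>Basis. norm u * (Cb b * norm w * poly_weight M y))"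
      by (intro sum_mono mult_mono Basis_le_norm Cb) (auto simp: Cb0 poly_weight_nonneg)
    also have "\<dots> = (\<Sum>b\<in>Basis. Cb b) * norm u * norm w * poly_weight M y"
      by (simp add: sum_distrib_left sum_distrib_right mult_ac)
    finally show ?thesis .
  qed
  moreover have "0 \<le> (\<Sum>b\<in>Basis. Cb b)" using Cb0 by (simp add: sum_nonneg)
  ultimately show thesis using that by blast
qed

lemma schwartz_taylor_bounds:
  fixes F :: "'a::euclidean_space \<Rightarrow> complex"
  assumes F: "schwartz F"
  obtains C where "0 \<le> C" "\<And>y s. norm s \<le> 1 \<Longrightarrow> norm (F (y - s) - F y) \<le> C * norm s * poly_weight M y"
    "\<And>y s. norm s \<le> 1 \<Longrightarrow>
       norm (F (y - s) - F y + frechet_derivative F (at y) s) \<le> C * (norm s)\<^sup>2 * poly_weight M y"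
proof -
  obtain C1 where C1: "0 \<le> C1" "\<And>y u. norm (frechet_derivative F (at y) u) \<le> C1 * norm u * poly_weight M y"
    using schwartz_derivative_bound[OF F] by blast
  obtain C2 where C2: "0 \<le> C2" "\<And>y u w. norm (\<Sum>b\<in>Basis. complex_of_real (u \<bullet> b) *
      frechet_derivative (iter_partial [b] F) (at y) w) \<le> C2 * norm u * norm w * poly_weight M y"
    using schwartz_second_derivative_bound[OF F] by blast
  define C where "C = 2 ^ M * C2 + C1"
  have rem: "norm (F (y - s) - F y + frechet_derivative F (at y) s) \<le> 2 ^ M * C2 * (norm s)\<^sup>2 * poly_weight M y"
    if s: "norm s \<le> 1" for y s :: 'a
  proof -
    have "norm (F (y + 1 *\<^sub>R - s) - F (y + 0 *\<^sub>R - s) - 1 *\<^sub>R frechet_derivative F (at (y + 0 *\<^sub>R - s)) (- s))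
        \<le> C2 * norm s * norm s * (2 ^ M * poly_weight M y) * 1\<^sup>2"
    proof (rule taylor_second_order_bound)
      show "((\<lambda>t. F (y + t *\<^sub>R - s)) has_vector_derivative frechet_derivative F (at (y + t *\<^sub>R - s)) (- s)) (at t)" for t
        by (rule has_vector_derivative_along_line[OF schwartz_has_derivative[OF F]])
      show "((\<lambda>t. frechet_derivative F (at (y + t *\<^sub>R - s)) (- s)) has_vector_derivative
          (\<Sum>b\<in>Basis. complex_of_real (- s \<bullet> b) * frechet_derivative (iter_partial [b] F) (at (y + t *\<^sub>R - s)) (- s)))
          (at t)" for t
        by (rule has_vector_derivative_along_line[OF schwartz_directional_derivative_has_derivative[OF F]])
      fix t :: real assume t: "t \<in> {0..1}"
      have "poly_weight M (y - t *\<^sub>R s) \<le> 2 ^ M * poly_weight M y"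
        using poly_weight_shift_le_1[of "t *\<^sub>R s" M y] t s by (auto simp: mult_le_one)
      then show "norm (\<Sum>b\<in>Basis. complex_of_real (- s \<bullet> b) *
          frechet_derivative (iter_partial [b] F) (at (y + t *\<^sub>R - s)) (- s))
        \<le> C2 * norm s * norm s * (2 ^ M * poly_weight M y)"
        using C2(2)[of "- s" "y - t *\<^sub>R s" "- s"] mult_left_mono[of _ _ "C2 * norm s * norm s"] C2(1)
        by (simp add: order_trans)
    qed simp
    moreover have "frechet_derivative F (at y) (- s) = - frechet_derivative F (at y) s"
      using linear_frechet_derivative[OF schwartz_differentiable[OF F]] by (simp add: linear_neg)
    ultimately show ?thesis by (simp add: power2_eq_square mult_ac)
  qed
  show thesis
  proof (rule that)
    show "0 \<le> C" unfolding C_def using C1(1) C2(1) by simp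
    fix y s :: 'a assume s: "norm s \<le> 1"
    have "2 ^ M * C2 * (norm s)\<^sup>2 * poly_weight M y \<le> C * (norm s)\<^sup>2 * poly_weight M y"
      unfolding C_def using C1(1) by (intro mult_right_mono poly_weight_nonneg) auto
    with rem[of s y, OF s] show "norm (F (y - s) - F y + frechet_derivative F (at y) s) \<le> C * (norm s)\<^sup>2 * poly_weight M y"
      by (rule order_trans)
    have "2 ^ M * C2 * (norm s)\<^sup>2 * poly_weight M y \<le> 2 ^ M * C2 * norm s * poly_weight M y"
      using s C2(1) mult_left_le[OF s norm_ge_zero]
      by (intro mult_right_mono mult_left_mono poly_weight_nonneg) (auto simp: power2_eq_square)
    then show "norm (F (y - s) - F y) \<le> C * norm s * poly_weight M y"
      using rem[of s y, OF s] C1(2)[of y s] norm_triangle_ineq4[of "F (y - s) - F y + frechet_derivative F (at y) s"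
        "frechet_derivative F (at y) s"] unfolding C_def by (simp add: algebra_simps)
  qed
qed

section \<open>Square-integrable functions\<close>

lemma borel_measurable_cnj [measurable]:
  "f \<in> borel_measurable M \<Longrightarrow> (\<lambda>x. cnj (f x)) \<in> borel_measurable M"
  by (rule measurable_compose[of f M borel cnj])
     (auto intro: borel_measurable_continuous_onI continuous_on_cnj continuous_on_id)

lemma integrable_prod_inverse_1_plus_square:
  "integrable lborel (\<lambda>y::'a::euclidean_space. \<Prod>b\<in>Basis. inverse (1 + (y \<bullet> b)\<^sup>2))"
proof -
  have "einterval (-\<infinity>) \<infinity> = UNIV" by (auto simp: einterval_def)
  then have 1: "integrable lborel (\<lambda>x::real. inverse (1 + x\<^sup>2))"
    using integrable_inverse_1_plus_square by (simp add: set_integrable_def)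
  have "product_sigma_finite (\<lambda>_::'a. lborel::real measure)"
    by (simp add: product_sigma_finite_def lborel.sigma_finite_measure_axioms)
  from product_sigma_finite.product_integrable_prod[OF this, where f="\<lambda>_ x. inverse (1 + x\<^sup>2)"
    and I="Basis::'a set"]
  have "integrable (\<Pi>\<^sub>M b\<in>(Basis::'a set). lborel) (\<lambda>x. \<Prod>b\<in>Basis. inverse (1 + (x b::real)\<^sup>2))"
    using 1 by simp
  moreover have "((\<Sum>c\<in>Basis. x c *\<^sub>R c)::'a) \<bullet> b = x b" if "b \<in> Basis" for x b
    using that by (simp add: inner_sum_left inner_Basis if_distrib cong: if_cong)
  ultimately have "integrable (\<Pi>\<^sub>M b\<in>Basis. lborel)
      (\<lambda>x. \<Prod>b\<in>Basis. inverse (1 + (((\<Sum>c\<in>Basis. x c *\<^sub>R c)::'a) \<bullet> b)\<^sup>2))"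
    by simp
  then show ?thesis
    by (subst lborel_eq) (subst integrable_distr_eq; simp)
qed

lemma poly_weight_sq_le_prod:
  "(poly_weight DIM('a) (y::'a::euclidean_space))\<^sup>2 \<le> (\<Prod>b\<in>Basis. inverse (1 + (y \<bullet> b)\<^sup>2))"
proof -
  have "1 + (y \<bullet> b)\<^sup>2 \<le> (1 + norm y)\<^sup>2" if "b \<in> Basis" for b
  proof -
    have "(y \<bullet> b)\<^sup>2 \<le> (norm y)\<^sup>2"
      using Basis_le_norm[OF that, of y] by (metis abs_le_square_iff abs_norm_cancel)
    moreover have "(1 + norm y)\<^sup>2 = 1 + 2 * norm y + (norm y)\<^sup>2"
      by (simp add: power2_eq_square algebra_simps)
    ultimately show ?thesis using norm_ge_zero[of y] by linarith
  qed
  then have "(\<Prod>b\<in>(Basis::'a set). 1 + (y \<bullet> b)\<^sup>2) \<le> (\<Prod>b\<in>(Basis::'a set). (1 + norm y)\<^sup>2)"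
    by (intro prod_mono) (auto intro: add_pos_nonneg)
  also have "\<dots> = (1 + norm y) ^ (2 * DIM('a))" by (simp add: power_mult[symmetric] mult.commute)
  finally have le: "(\<Prod>b\<in>(Basis::'a set). 1 + (y \<bullet> b)\<^sup>2) \<le> (1 + norm y) ^ (2 * DIM('a))" .
  have "(poly_weight DIM('a) y)\<^sup>2 = inverse ((1 + norm y) ^ (2 * DIM('a)))"
    unfolding poly_weight_def by (simp add: power_mult mult.commute power_inverse)
  also have "\<dots> \<le> inverse (\<Prod>b\<in>(Basis::'a set). 1 + (y \<bullet> b)\<^sup>2)"
    using le by (rule le_imp_inverse_le) (auto intro!: prod_pos add_pos_nonneg)
  also have "\<dots> = (\<Prod>b\<in>Basis. inverse (1 + (y \<bullet> b)\<^sup>2))" by (simp add: prod_inversef[symmetric])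
  finally show ?thesis .
qed

lemma integrable_poly_weight_sq:
  "integrable lborel (\<lambda>y::'a::euclidean_space. (poly_weight DIM('a) y)\<^sup>2)"
proof (rule Bochner_Integration.integrable_bound[OF integrable_prod_inverse_1_plus_square])
  show "(\<lambda>y::'a. (poly_weight DIM('a) y)\<^sup>2) \<in> borel_measurable lborel"
    using poly_weight_continuous[of "DIM('a)", where 'a='a]
    by (simp add: borel_measurable_continuous_onI continuous_on_power)
  have "0 \<le> (\<Prod>b\<in>(Basis::'a set). inverse (1 + (x \<bullet> b)\<^sup>2))" for x :: 'a
    by (intro prod_nonneg) auto
  then show "AE x in lborel. norm ((poly_weight DIM('a) (x::'a))\<^sup>2) \<le> norm (\<Prod>b\<in>Basis. inverse (1 + (x \<bullet> b)\<^sup>2))"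
    using poly_weight_sq_le_prod by (intro AE_I2) simp
qed

lemma sq_int_measurable: "sq_int f \<Longrightarrow> f \<in> borel_measurable lborel"
  by (simp add: sq_int_def)

lemma sq_int_zero: "sq_int (\<lambda>y. 0)"
  unfolding sq_int_def by simp

lemma sq_int_add:
  assumes f: "sq_int f" and g: "sq_int g"
  shows "sq_int (\<lambda>y. f y + g y)"
proof -
  have [measurable]: "f \<in> borel_measurable lborel" "g \<in> borel_measurable lborel"
    using f g by (auto simp: sq_int_def)
  have "integrable lborel (\<lambda>x. (norm (f x + g x))\<^sup>2)"
  proof (rule Bochner_Integration.integrable_bound)
    show "integrable lborel (\<lambda>x. 2 * (norm (f x))\<^sup>2 + 2 * (norm (g x))\<^sup>2)"
      using f g unfolding sq_int_def by auto
    show "(\<lambda>x. (norm (f x + g x))\<^sup>2) \<in> borel_measurable lborel" by measurable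
    have "(norm (f x + g x))\<^sup>2 \<le> 2 * (norm (f x))\<^sup>2 + 2 * (norm (g x))\<^sup>2" for x
    proof -
      have "(norm (f x + g x))\<^sup>2 \<le> (norm (f x) + norm (g x))\<^sup>2"
        by (intro power_mono norm_triangle_ineq) auto
      also have "\<dots> \<le> 2 * (norm (f x))\<^sup>2 + 2 * (norm (g x))\<^sup>2"
        using sum_squares_bound[of "norm (f x)" "norm (g x)"] by (simp add: power2_sum)
      finally show ?thesis .
    qed
    then show "AE x in lborel. norm ((norm (f x + g x))\<^sup>2) \<le> norm (2 * (norm (f x))\<^sup>2 + 2 * (norm (g x))\<^sup>2)"
      by (intro AE_I2) simp
  qed
  then show ?thesis unfolding sq_int_def by simp
qed

lemma sq_int_cmult:
  assumes "sq_int f"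
  shows "sq_int (\<lambda>y. c * f y)"
proof -
  have [measurable]: "f \<in> borel_measurable lborel" using assms by (rule sq_int_measurable)
  have "integrable lborel (\<lambda>x. (norm c)\<^sup>2 * (norm (f x))\<^sup>2)"
    using assms unfolding sq_int_def by auto
  then show ?thesis unfolding sq_int_def by (simp add: norm_mult power_mult_distrib)
qed

lemma sq_int_diff: "sq_int f \<Longrightarrow> sq_int g \<Longrightarrow> sq_int (\<lambda>y. f y - g y)"
  using sq_int_add[of f "\<lambda>y. (- 1) * g y"] sq_int_cmult[of g "- 1"] by simp

lemma sq_int_sum:
  "finite I \<Longrightarrow> (\<And>i. i \<in> I \<Longrightarrow> sq_int (f i)) \<Longrightarrow> sq_int (\<lambda>y. \<Sum>i\<in>I. f i y)"
  by (induction I rule: finite_induct) (auto intro: sq_int_zero sq_int_add)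

lemma integrable_cnj_mult:
  assumes f: "sq_int f" and g: "sq_int g"
  shows "integrable lborel (\<lambda>x. cnj (f x) * g x)"
proof (rule Bochner_Integration.integrable_bound)
  have [measurable]: "f \<in> borel_measurable lborel" "g \<in> borel_measurable lborel"
    using f g by (auto simp: sq_int_def)
  show "integrable lborel (\<lambda>x. (norm (f x))\<^sup>2 + (norm (g x))\<^sup>2)"
    using f g unfolding sq_int_def by auto
  show "(\<lambda>x. cnj (f x) * g x) \<in> borel_measurable lborel" by measurable
  have "norm (f x) * norm (g x) \<le> (norm (f x))\<^sup>2 + (norm (g x))\<^sup>2" for x
  proof -
    have "2 * (norm (f x) * norm (g x)) \<le> (norm (f x))\<^sup>2 + (norm (g x))\<^sup>2"
      using sum_squares_bound[of "norm (f x)" "norm (g x)"] by (simp add: mult.assoc)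
    moreover have "0 \<le> norm (f x) * norm (g x)" by simp
    ultimately show ?thesis by linarith
  qed
  then show "AE x in lborel. norm (cnj (f x) * g x) \<le> norm ((norm (f x))\<^sup>2 + (norm (g x))\<^sup>2)"
    by (intro AE_I2) (simp add: norm_mult)
qed

lemma integral_mult_le_sqrt:
  fixes f g :: "'a \<Rightarrow> real"
  assumes [measurable]: "f \<in> borel_measurable M" "g \<in> borel_measurable M"
    and nn: "\<And>x. 0 \<le> f x" "\<And>x. 0 \<le> g x"
    and f2: "integrable M (\<lambda>x. (f x)\<^sup>2)" and g2: "integrable M (\<lambda>x. (g x)\<^sup>2)"
    and fg: "integrable M (\<lambda>x. f x * g x)"
  shows "(\<integral>x. f x * g x \<partial>M) \<le> sqrt (\<integral>x. (f x)\<^sup>2 \<partial>M) * sqrt (\<integral>x. (g x)\<^sup>2 \<partial>M)"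
proof -
  have nn_eq: "(\<integral>\<^sup>+x. ennreal (h x) \<partial>M) = ennreal (\<integral>x. h x \<partial>M)"
    if "integrable M h" "\<And>x. 0 \<le> h x" for h
    by (rule nn_integral_eq_integral) (use that in auto)
  have "ennreal ((\<integral>x. f x * g x \<partial>M)\<^sup>2) = (\<integral>\<^sup>+x. ennreal (f x) * ennreal (g x) \<partial>M)\<^sup>2"
    using nn_eq[OF fg] nn by (simp add: ennreal_mult ennreal_power integral_nonneg_AE)
  also have "\<dots> \<le> (\<integral>\<^sup>+x. ennreal (f x) ^ 2 \<partial>M) * (\<integral>\<^sup>+x. ennreal (g x) ^ 2 \<partial>M)"
    by (rule Cauchy_Schwarz_nn_integral) auto
  also have "\<dots> = ennreal ((\<integral>x. (f x)\<^sup>2 \<partial>M) * (\<integral>x. (g x)\<^sup>2 \<partial>M))"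
    using nn_eq[OF f2] nn_eq[OF g2] nn by (simp add: ennreal_power ennreal_mult integral_nonneg_AE)
  finally have "(\<integral>x. f x * g x \<partial>M)\<^sup>2 \<le> (\<integral>x. (f x)\<^sup>2 \<partial>M) * (\<integral>x. (g x)\<^sup>2 \<partial>M)"
    by (simp add: integral_nonneg_AE)
  then show ?thesis
    by (metis real_le_rsqrt real_sqrt_mult)
qed

lemma l2_norm_nonneg: "0 \<le> l2_norm f"
  unfolding l2_norm_def by simp

lemma l2_inner_cauchy_schwarz:
  assumes f: "sq_int f" and g: "sq_int g"
  shows "norm (l2_inner f g) \<le> l2_norm f * l2_norm g"
proof -
  have fg: "integrable lborel (\<lambda>x. norm (f x) * norm (g x))"
    using integrable_norm[OF integrable_cnj_mult[OF f g]] by (simp add: norm_mult)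
  have "norm (l2_inner f g) \<le> (LINT x|lborel. norm (f x) * norm (g x))"
    unfolding l2_inner_def using integral_norm_bound[of lborel "\<lambda>x. cnj (f x) * g x"]
    by (simp add: norm_mult)
  also have "\<dots> \<le> l2_norm f * l2_norm g"
    unfolding l2_norm_def
  proof (rule integral_mult_le_sqrt[OF _ _ _ _ _ _ fg])
    show "(\<lambda>x. norm (f x)) \<in> borel_measurable lborel" "(\<lambda>x. norm (g x)) \<in> borel_measurable lborel"
      using measurable_compose[OF sq_int_measurable borel_measurable_norm] f g by auto
    show "integrable lborel (\<lambda>x. (norm (f x))\<^sup>2)" "integrable lborel (\<lambda>x. (norm (g x))\<^sup>2)"
      using f g by (simp_all add: sq_int_def)
  qed simp_all
  finally show ?thesis .
qed

lemma l2_inner_add_left: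
  assumes "sq_int f1" "sq_int f2" "sq_int g"
  shows "l2_inner (\<lambda>y. f1 y + f2 y) g = l2_inner f1 g + l2_inner f2 g"
  unfolding l2_inner_def using integrable_cnj_mult[OF assms(1,3)] integrable_cnj_mult[OF assms(2,3)]
  by (simp add: distrib_right)

lemma l2_inner_add_right:
  assumes "sq_int f" "sq_int g1" "sq_int g2"
  shows "l2_inner f (\<lambda>y. g1 y + g2 y) = l2_inner f g1 + l2_inner f g2"
  unfolding l2_inner_def using integrable_cnj_mult[OF assms(1,2)] integrable_cnj_mult[OF assms(1,3)]
  by (simp add: distrib_left)

lemma l2_inner_cmult_left: "l2_inner (\<lambda>y. c * f y) g = cnj c * l2_inner f g"
  unfolding l2_inner_def by (simp add: mult.assoc)

lemma l2_inner_cmult_right: "l2_inner f (\<lambda>y. c * g y) = c * l2_inner f g"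
  unfolding l2_inner_def by (simp add: mult.left_commute)

lemma l2_inner_sum_left:
  assumes "finite I" "\<And>i. i \<in> I \<Longrightarrow> sq_int (f i)" "sq_int g"
  shows "l2_inner (\<lambda>y. \<Sum>i\<in>I. f i y) g = (\<Sum>i\<in>I. l2_inner (f i) g)"
  unfolding l2_inner_def sum_distrib_right cnj_sum
  by (rule Bochner_Integration.integral_sum) (use assms integrable_cnj_mult in auto)

lemma l2_inner_cong_AE:
  assumes f: "sq_int f" and g: "sq_int g" "sq_int g'" and eq: "AE x in lborel. g x = g' x"
  shows "l2_inner f g = l2_inner f g'"
  unfolding l2_inner_def
proof (rule integral_cong_AE)
  show "(\<lambda>x. cnj (f x) * g x) \<in> borel_measurable lborel" "(\<lambda>x. cnj (f x) * g' x) \<in> borel_measurable lborel"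
    using integrable_cnj_mult[OF f] g by auto
  show "AE x in lborel. cnj (f x) * g x = cnj (f x) * g' x" using eq by eventually_elim simp
qed

lemma weighted_bound_imp_l2:
  fixes f :: "real^'n \<Rightarrow> complex"
  assumes f: "f \<in> borel_measurable lborel" and bound: "\<And>y. norm (f y) \<le> c * poly_weight CARD('n) y"
  shows "sq_int f" "l2_norm f \<le> c * l2_norm (\<lambda>y::real^'n. complex_of_real (poly_weight CARD('n) y))"
proof -
  have c: "0 \<le> c" using bound by (rule weighted_bound_nonneg)
  have W: "integrable lborel (\<lambda>y::real^'n. c\<^sup>2 * (poly_weight CARD('n) y)\<^sup>2)"
    using integrable_poly_weight_sq[where 'a="real^'n"] by simp
  have pointwise: "(norm (f y))\<^sup>2 \<le> c\<^sup>2 * (poly_weight CARD('n) y)\<^sup>2" for y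
    using power_mono[OF bound[of y] norm_ge_zero] by (simp add: power_mult_distrib)
  have "(\<lambda>x. (norm (f x))\<^sup>2) \<in> borel_measurable lborel"
    using measurable_compose[OF f borel_measurable_norm] by simp
  then have I: "integrable lborel (\<lambda>x. (norm (f x))\<^sup>2)"
    by (rule Bochner_Integration.integrable_bound[OF W]) (use pointwise in auto)
  then show "sq_int f" unfolding sq_int_def using f by simp
  have "(LINT x|lborel. (norm (f x))\<^sup>2) \<le> (LINT x|lborel. c\<^sup>2 * (poly_weight CARD('n) (x::real^'n))\<^sup>2)"
    by (intro integral_mono_AE I W AE_I2 pointwise)
  then have "l2_norm f \<le> sqrt (c\<^sup>2 * (LINT x|lborel. (poly_weight CARD('n) (x::real^'n))\<^sup>2))"
    unfolding l2_norm_def by simp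
  also have "\<dots> = c * l2_norm (\<lambda>y::real^'n. complex_of_real (poly_weight CARD('n) y))"
    unfolding l2_norm_def using c by (simp add: real_sqrt_mult poly_weight_nonneg)
  finally show "l2_norm f \<le> c * l2_norm (\<lambda>y::real^'n. complex_of_real (poly_weight CARD('n) y))" .
qed

section \<open>The sesquilinear form of a bounded operator\<close>

definition op_form ::
  "((real^'n \<Rightarrow> complex) \<Rightarrow> (real^'n \<Rightarrow> complex)) \<Rightarrow> (real^'n \<Rightarrow> complex) \<Rightarrow> (real^'n \<Rightarrow> complex) \<Rightarrow> complex"
  where "op_form \<rho> f g = l2_inner f (\<rho> g)"

context
  fixes \<rho> :: "(real^'n \<Rightarrow> complex) \<Rightarrow> (real^'n \<Rightarrow> complex)"
  assumes op: "l2_bounded_operator \<rho>"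
begin

lemma sq_int_op: "sq_int f \<Longrightarrow> sq_int (\<rho> f)"
  using op unfolding l2_bounded_operator_def by blast

lemma op_form_bound:
  "\<exists>C\<ge>0. \<forall>f g. sq_int f \<longrightarrow> sq_int g \<longrightarrow> norm (op_form \<rho> f g) \<le> C * l2_norm f * l2_norm g"
proof -
  obtain C where C: "\<And>f. sq_int f \<Longrightarrow> l2_norm (\<rho> f) \<le> C * l2_norm f"
    using op unfolding l2_bounded_operator_def by blast
  have "norm (op_form \<rho> f g) \<le> max C 0 * l2_norm f * l2_norm g" if "sq_int f" "sq_int g" for f g
  proof -
    have "norm (op_form \<rho> f g) \<le> l2_norm f * l2_norm (\<rho> g)"
      unfolding op_form_def using that by (intro l2_inner_cauchy_schwarz sq_int_op)
    also have "\<dots> \<le> l2_norm f * (max C 0 * l2_norm g)"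
    proof (intro mult_left_mono l2_norm_nonneg)
      have "C * l2_norm g \<le> max C 0 * l2_norm g" by (intro mult_right_mono l2_norm_nonneg) simp
      then show "l2_norm (\<rho> g) \<le> max C 0 * l2_norm g" using C[OF that(2)] by linarith
    qed
    finally show ?thesis by (simp add: mult_ac)
  qed
  then show ?thesis by (intro exI[of _ "max C 0"]) auto
qed

lemma op_form_add_right:
  assumes "sq_int f" "sq_int g1" "sq_int g2"
  shows "op_form \<rho> f (\<lambda>y. g1 y + g2 y) = op_form \<rho> f g1 + op_form \<rho> f g2"
proof -
  have "AE x in lborel. \<rho> (\<lambda>y. g1 y + g2 y) x = \<rho> g1 x + \<rho> g2 x"
    using op assms(2,3) unfolding l2_bounded_operator_def by blast
  then have "op_form \<rho> f (\<lambda>y. g1 y + g2 y) = l2_inner f (\<lambda>x. \<rho> g1 x + \<rho> g2 x)"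
    unfolding op_form_def using assms by (intro l2_inner_cong_AE sq_int_op sq_int_add)
  also have "\<dots> = op_form \<rho> f g1 + op_form \<rho> f g2"
    unfolding op_form_def using assms by (intro l2_inner_add_right sq_int_op)
  finally show ?thesis .
qed

lemma op_form_cmult_right:
  assumes "sq_int f" "sq_int g"
  shows "op_form \<rho> f (\<lambda>y. c * g y) = c * op_form \<rho> f g"
proof -
  have "AE x in lborel. \<rho> (\<lambda>y. c * g y) x = c * \<rho> g x"
    using op assms(2) unfolding l2_bounded_operator_def by blast
  then have "op_form \<rho> f (\<lambda>y. c * g y) = l2_inner f (\<lambda>x. c * \<rho> g x)"
    unfolding op_form_def using assms by (intro l2_inner_cong_AE sq_int_op sq_int_cmult)
  then show ?thesis by (simp add: l2_inner_cmult_right op_form_def)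
qed

lemma op_form_diff_right:
  assumes "sq_int f" "sq_int g1" "sq_int g2"
  shows "op_form \<rho> f (\<lambda>y. g1 y - g2 y) = op_form \<rho> f g1 - op_form \<rho> f g2"
  using op_form_add_right[OF assms(1,2) sq_int_cmult[OF assms(3)], of "- 1"]
    op_form_cmult_right[OF assms(1,3), of "- 1"] by simp

lemma op_form_sum_right:
  assumes "sq_int f" "finite I" "\<And>i. i \<in> I \<Longrightarrow> sq_int (g i)"
  shows "op_form \<rho> f (\<lambda>y. \<Sum>i\<in>I. g i y) = (\<Sum>i\<in>I. op_form \<rho> f (g i))"
  using assms(2,3)
proof (induction I rule: finite_induct)
  case empty
  then show ?case using op_form_cmult_right[OF assms(1) sq_int_zero, of 0] by simp
next
  case (insert i I)
  then show ?case by (simp add: op_form_add_right[OF assms(1)] sq_int_sum)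
qed

lemma op_form_add_left:
  "sq_int f1 \<Longrightarrow> sq_int f2 \<Longrightarrow> sq_int g \<Longrightarrow>
    op_form \<rho> (\<lambda>y. f1 y + f2 y) g = op_form \<rho> f1 g + op_form \<rho> f2 g"
  unfolding op_form_def by (intro l2_inner_add_left sq_int_op)

lemma op_form_cmult_left: "op_form \<rho> (\<lambda>y. c * f y) g = cnj c * op_form \<rho> f g"
  unfolding op_form_def by (rule l2_inner_cmult_left)

lemma op_form_diff_left:
  assumes "sq_int f1" "sq_int f2" "sq_int g"
  shows "op_form \<rho> (\<lambda>y. f1 y - f2 y) g = op_form \<rho> f1 g - op_form \<rho> f2 g"
  using op_form_add_left[OF assms(1) sq_int_cmult[OF assms(2)] assms(3), of "- 1"]
    op_form_cmult_left[of "- 1" f2 g] by simp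

lemma op_form_sum_left:
  "finite I \<Longrightarrow> (\<And>i. i \<in> I \<Longrightarrow> sq_int (f i)) \<Longrightarrow> sq_int g \<Longrightarrow>
    op_form \<rho> (\<lambda>y. \<Sum>i\<in>I. f i y) g = (\<Sum>i\<in>I. op_form \<rho> (f i) g)"
  unfolding op_form_def by (intro l2_inner_sum_left sq_int_op)

lemma has_derivative_at_quadratic_remainder:
  fixes f :: "'a::real_normed_vector \<Rightarrow> 'b::real_normed_vector"
  assumes D: "bounded_linear D"
    and rem: "\<And>v. norm v \<le> 1 \<Longrightarrow> norm (f (z + v) - f z - D v) \<le> M * (norm v)\<^sup>2"
  shows "(f has_derivative D) (at z)"
  unfolding has_derivative_at_alt
proof (intro conjI allI impI D)
  fix e :: real assume e: "0 < e"
  define d where "d = min 1 (e / (\<bar>M\<bar> + 1))"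
  have "norm (f y - f z - D (y - z)) \<le> e * norm (y - z)" if "norm (y - z) < d" for y
  proof -
    have "norm (y - z) \<le> 1" using that by (simp add: d_def)
    from rem[OF this] have "norm (f y - f z - D (y - z)) \<le> M * (norm (y - z))\<^sup>2" by simp
    also have "\<dots> \<le> (\<bar>M\<bar> * norm (y - z)) * norm (y - z)"
      using mult_right_mono[OF abs_ge_self[of M], of "(norm (y - z))\<^sup>2"]
      by (simp add: power2_eq_square mult.assoc)
    also have "\<dots> \<le> e * norm (y - z)"
    proof (rule mult_right_mono)
      have "\<bar>M\<bar> * norm (y - z) \<le> \<bar>M\<bar> * (e / (\<bar>M\<bar> + 1))"
        using that by (intro mult_left_mono) (auto simp: d_def)
      also have "\<dots> \<le> e" using e by (simp add: field_simps)
      finally show "\<bar>M\<bar> * norm (y - z) \<le> e" .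
    qed simp
    finally show ?thesis .
  qed
  moreover have "0 < d" using e by (simp add: d_def)
  ultimately show "\<exists>d>0. \<forall>y. norm (y - z) < d \<longrightarrow> norm (f y - f z - D (y - z)) \<le> e * norm (y - z)"
    by blast
qed

text \<open>This splitting of the remainder needs bounds only on the increments of \<open>a'\<close> and \<open>b'\<close>,
  not on \<open>a'\<close> and \<open>b'\<close> themselves.\<close>

lemma op_form_remainder_le:
  assumes sq: "sq_int a'" "sq_int a" "sq_int b'" "sq_int b" "sq_int A" "sq_int B"
    and C: "\<And>f g. sq_int f \<Longrightarrow> sq_int g \<Longrightarrow> norm (op_form \<rho> f g) \<le> C * l2_norm f * l2_norm g"
  shows "norm (op_form \<rho> a' b' - op_form \<rho> a b - (op_form \<rho> A b + op_form \<rho> a B))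
    \<le> C * l2_norm (\<lambda>y. a' y - a y - A y) * l2_norm b + C * l2_norm (\<lambda>y. a' y - a y) * l2_norm (\<lambda>y. b' y - b y)
      + C * l2_norm a * l2_norm (\<lambda>y. b' y - b y - B y)"
proof -
  define X1 where "X1 = op_form \<rho> (\<lambda>y. a' y - a y - A y) b"
  define X2 where "X2 = op_form \<rho> (\<lambda>y. a' y - a y) (\<lambda>y. b' y - b y)"
  define X3 where "X3 = op_form \<rho> a (\<lambda>y. b' y - b y - B y)"
  have e1: "X1 = op_form \<rho> a' b - op_form \<rho> a b - op_form \<rho> A b"
    unfolding X1_def using op_form_diff_left[OF sq_int_diff[OF sq(1,2)] sq(5,4)] op_form_diff_left[OF sq(1,2,4)]
    by simp
  have e2: "X2 = op_form \<rho> a' b' - op_form \<rho> a' b - (op_form \<rho> a b' - op_form \<rho> a b)"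
    unfolding X2_def using op_form_diff_left[OF sq(1,2) sq_int_diff[OF sq(3,4)]]
      op_form_diff_right[OF sq(1,3,4)] op_form_diff_right[OF sq(2,3,4)] by simp
  have e3: "X3 = op_form \<rho> a b' - op_form \<rho> a b - op_form \<rho> a B"
    unfolding X3_def using op_form_diff_right[OF sq(2) sq_int_diff[OF sq(3,4)] sq(6)] op_form_diff_right[OF sq(2,3,4)]
    by simp
  have eq: "op_form \<rho> a' b' - op_form \<rho> a b - (op_form \<rho> A b + op_form \<rho> a B) = X1 + X2 + X3"
    unfolding e1 e2 e3 by (simp add: algebra_simps)
  have "norm X1 \<le> C * l2_norm (\<lambda>y. a' y - a y - A y) * l2_norm b"
    "norm X2 \<le> C * l2_norm (\<lambda>y. a' y - a y) * l2_norm (\<lambda>y. b' y - b y)"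
    "norm X3 \<le> C * l2_norm a * l2_norm (\<lambda>y. b' y - b y - B y)"
    unfolding X1_def X2_def X3_def using sq by (simp_all add: C sq_int_diff)
  then show ?thesis
    unfolding eq using norm_triangle_ineq[of "X1 + X2" X3] norm_triangle_ineq[of X1 X2] by linarith
qed

lemma op_form_has_derivative:
  fixes a A :: "'p::real_normed_vector \<Rightarrow> real^'n \<Rightarrow> complex"
    and b B :: "'q::real_normed_vector \<Rightarrow> real^'n \<Rightarrow> complex"
  assumes sq: "\<And>\<xi>. sq_int (a \<xi>)" "\<And>\<eta>. sq_int (b \<eta>)" "\<And>h. sq_int (A h)" "\<And>k. sq_int (B k)"
    and a: "\<And>h. norm h \<le> 1 \<Longrightarrow> l2_norm (\<lambda>y. a (\<alpha> + h) y - a \<alpha> y - A h y) \<le> K * (norm h)\<^sup>2"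
      "\<And>h. norm h \<le> 1 \<Longrightarrow> l2_norm (\<lambda>y. a (\<alpha> + h) y - a \<alpha> y) \<le> K * norm h"
    and b: "\<And>k. norm k \<le> 1 \<Longrightarrow> l2_norm (\<lambda>y. b (\<beta> + k) y - b \<beta> y - B k y) \<le> K * (norm k)\<^sup>2"
      "\<And>k. norm k \<le> 1 \<Longrightarrow> l2_norm (\<lambda>y. b (\<beta> + k) y - b \<beta> y) \<le> K * norm k"
    and lin: "bounded_linear (\<lambda>v. op_form \<rho> (A (fst v)) (b \<beta>) + op_form \<rho> (a \<alpha>) (B (snd v)))"
  shows "((\<lambda>z. op_form \<rho> (a (fst z)) (b (snd z))) has_derivative
           (\<lambda>v. op_form \<rho> (A (fst v)) (b \<beta>) + op_form \<rho> (a \<alpha>) (B (snd v)))) (at (\<alpha>, \<beta>))"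
proof -
  obtain C where C0: "0 \<le> C"
    and C: "\<And>f g. sq_int f \<Longrightarrow> sq_int g \<Longrightarrow> norm (op_form \<rho> f g) \<le> C * l2_norm f * l2_norm g"
    using op_form_bound by blast
  define M where "M = C * \<bar>K\<bar> * l2_norm (b \<beta>) + C * \<bar>K\<bar> * \<bar>K\<bar> + C * \<bar>K\<bar> * l2_norm (a \<alpha>)"
  show ?thesis
  proof (rule has_derivative_at_quadratic_remainder[OF lin, where M=M])
    fix v :: "'p \<times> 'q" assume v: "norm v \<le> 1"
    define h k where "h = fst v" and "k = snd v"
    have hk: "norm h \<le> norm v" "norm k \<le> norm v"
      unfolding h_def k_def using norm_fst_le[of "fst v" "snd v"] norm_snd_le[of "snd v" "fst v"] by auto
    have K: "K * s \<le> \<bar>K\<bar> * t" if "0 \<le> s" "s \<le> t" for s t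
      using that by (meson abs_ge_self abs_ge_zero mult_mono order_trans mult_right_mono)
    have h1: "norm h \<le> 1" and k1: "norm k \<le> 1" using hk v by auto
    have sq_v: "(norm h)\<^sup>2 \<le> (norm v)\<^sup>2" "(norm k)\<^sup>2 \<le> (norm v)\<^sup>2"
      using hk by (auto intro: power_mono)
    have ra: "l2_norm (\<lambda>y. a (\<alpha> + h) y - a \<alpha> y - A h y) \<le> \<bar>K\<bar> * (norm v)\<^sup>2"
      using a(1)[OF h1] K[OF zero_le_power2 sq_v(1)] by linarith
    have ra': "l2_norm (\<lambda>y. a (\<alpha> + h) y - a \<alpha> y) \<le> \<bar>K\<bar> * norm v"
      using a(2)[OF h1] K[OF norm_ge_zero hk(1)] by linarith
    have rb: "l2_norm (\<lambda>y. b (\<beta> + k) y - b \<beta> y - B k y) \<le> \<bar>K\<bar> * (norm v)\<^sup>2"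
      using b(1)[OF k1] K[OF zero_le_power2 sq_v(2)] by linarith
    have rb': "l2_norm (\<lambda>y. b (\<beta> + k) y - b \<beta> y) \<le> \<bar>K\<bar> * norm v"
      using b(2)[OF k1] K[OF norm_ge_zero hk(2)] by linarith
    have "norm (op_form \<rho> (a (\<alpha> + h)) (b (\<beta> + k)) - op_form \<rho> (a \<alpha>) (b \<beta>)
        - (op_form \<rho> (A h) (b \<beta>) + op_form \<rho> (a \<alpha>) (B k)))
      \<le> C * (\<bar>K\<bar> * (norm v)\<^sup>2) * l2_norm (b \<beta>) + C * (\<bar>K\<bar> * norm v) * (\<bar>K\<bar> * norm v)
        + C * l2_norm (a \<alpha>) * (\<bar>K\<bar> * (norm v)\<^sup>2)"
    proof -
      have "C * l2_norm (\<lambda>y. a (\<alpha> + h) y - a \<alpha> y - A h y) * l2_norm (b \<beta>)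
          \<le> C * (\<bar>K\<bar> * (norm v)\<^sup>2) * l2_norm (b \<beta>)"
        using ra C0 by (intro mult_right_mono mult_left_mono l2_norm_nonneg)
      moreover have "C * l2_norm (\<lambda>y. a (\<alpha> + h) y - a \<alpha> y) * l2_norm (\<lambda>y. b (\<beta> + k) y - b \<beta> y)
          \<le> C * (\<bar>K\<bar> * norm v) * (\<bar>K\<bar> * norm v)"
        using ra' rb' C0 by (intro mult_mono mult_left_mono l2_norm_nonneg) (auto intro: order_trans[OF l2_norm_nonneg])
      moreover have "C * l2_norm (a \<alpha>) * l2_norm (\<lambda>y. b (\<beta> + k) y - b \<beta> y - B k y)
          \<le> C * l2_norm (a \<alpha>) * (\<bar>K\<bar> * (norm v)\<^sup>2)"
        using rb C0 by (intro mult_left_mono mult_nonneg_nonneg l2_norm_nonneg)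
      moreover note op_form_remainder_le[OF sq(1)[of "\<alpha> + h"] sq(1)[of \<alpha>] sq(2)[of "\<beta> + k"] sq(2)[of \<beta>]
          sq(3)[of h] sq(4)[of k] C]
      ultimately show ?thesis by linarith
    qed
    then show "norm (op_form \<rho> (a (fst ((\<alpha>, \<beta>) + v))) (b (snd ((\<alpha>, \<beta>) + v))) -
        op_form \<rho> (a (fst (\<alpha>, \<beta>))) (b (snd (\<alpha>, \<beta>))) -
        (op_form \<rho> (A (fst v)) (b \<beta>) + op_form \<rho> (a \<alpha>) (B (snd v)))) \<le> M * (norm v)\<^sup>2"
      unfolding M_def h_def k_def by (simp add: algebra_simps power2_eq_square)
  qed
qed

end

section \<open>Displacements\<close>

type_synonym 'n phase_point = "(real, 'n) vec \<times> (real, 'n) vec"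

definition symplectic_form :: "('n::finite) phase_point \<Rightarrow> 'n phase_point \<Rightarrow> real" where
  "symplectic_form \<xi> h = fst \<xi> \<bullet> snd h - fst h \<bullet> snd \<xi>"

definition displace_generator :: "(real^('n::finite) \<Rightarrow> complex) \<Rightarrow> 'n phase_point \<Rightarrow> real^'n \<Rightarrow> complex" where
  "displace_generator F h y = \<i> * complex_of_real (y \<bullet> snd h) * F y - frechet_derivative F (at y) (fst h)"

definition displace_deriv ::
  "(real^('n::finite) \<Rightarrow> complex) \<Rightarrow> 'n phase_point \<Rightarrow> 'n phase_point \<Rightarrow> real^'n \<Rightarrow> complex" where
  "displace_deriv F \<xi> h = displace \<xi>
     (\<lambda>y. displace_generator F h y + \<i> * complex_of_real (symplectic_form \<xi> h / 2) * F y)"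

lemma displace_add:
  "displace (\<xi> + h) F y =
    exp (\<i> * complex_of_real (symplectic_form \<xi> h / 2)) * displace \<xi> (displace h F) y"
proof -
  have "(y - (1/2) *\<^sub>R fst (\<xi> + h)) \<bullet> snd (\<xi> + h) =
      symplectic_form \<xi> h / 2 + ((y - (1/2) *\<^sub>R fst \<xi>) \<bullet> snd \<xi> + (y - fst \<xi> - (1/2) *\<^sub>R fst h) \<bullet> snd h)"
    unfolding symplectic_form_def
    by (simp add: algebra_simps) (simp add: field_simps)
  then have "exp (\<i> * complex_of_real ((y - (1/2) *\<^sub>R fst (\<xi> + h)) \<bullet> snd (\<xi> + h))) =
      exp (\<i> * complex_of_real (symplectic_form \<xi> h / 2)) *
      (exp (\<i> * complex_of_real ((y - (1/2) *\<^sub>R fst \<xi>) \<bullet> snd \<xi>)) *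
       exp (\<i> * complex_of_real ((y - fst \<xi> - (1/2) *\<^sub>R fst h) \<bullet> snd h)))"
    by (simp only: of_real_add distrib_left exp_add)
  then show ?thesis
    unfolding displace_def by (simp add: mult.assoc diff_diff_eq)
qed

lemma norm_displace: "norm (displace \<xi> F y) = norm (F (y - fst \<xi>))"
  by (simp add: displace_def norm_mult)

lemma displace_weighted_bound:
  assumes "\<And>y. norm (g y) \<le> K * poly_weight N y"
  shows "norm (displace \<xi> g y) \<le> K * (1 + norm \<xi>) ^ N * poly_weight N y"
proof -
  have K: "0 \<le> K" using assms by (rule weighted_bound_nonneg)
  have "norm (displace \<xi> g y) \<le> K * poly_weight N (y - fst \<xi>)"
    unfolding norm_displace by (rule assms)
  also have "\<dots> \<le> K * ((1 + norm (fst \<xi>)) ^ N * poly_weight N y)"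
    using K by (intro mult_left_mono poly_weight_shift)
  also have "\<dots> \<le> K * ((1 + norm \<xi>) ^ N * poly_weight N y)"
    using K norm_fst_le[of "fst \<xi>" "snd \<xi>"]
    by (intro mult_left_mono mult_right_mono power_mono poly_weight_nonneg) auto
  finally show ?thesis by (simp add: mult_ac)
qed

lemma displace_continuous:
  assumes "continuous_on UNIV F"
  shows "continuous_on UNIV (displace \<xi> F)"
proof -
  have "continuous_on UNIV (\<lambda>y. F (y - fst \<xi>))"
    by (rule continuous_on_compose2[OF assms]) (intro continuous_intros, auto)
  then show ?thesis unfolding displace_def[abs_def] by (intro continuous_intros)
qed

lemma sq_int_displace:
  fixes F :: "real^'n \<Rightarrow> complex"
  assumes F: "schwartz F"
  shows "sq_int (displace \<xi> F)"
proof -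
  obtain C where C: "\<And>y. norm (F y) \<le> C * poly_weight CARD('n) y"
    using schwartz_weighted_bound[OF F] by blast
  have "displace \<xi> F \<in> borel_measurable lborel"
    using displace_continuous[OF schwartz_continuous[OF F]] by (simp add: borel_measurable_continuous_onI)
  from weighted_bound_imp_l2(1)[OF this displace_weighted_bound[OF C]] show ?thesis .
qed

lemma norm_phase_diff_le:
  "norm (exp (\<i> * complex_of_real \<theta>) * P - P0) \<le> \<bar>\<theta>\<bar> * norm P + norm (P - P0)"
proof -
  have "exp (\<i> * complex_of_real \<theta>) * P - P0 = (exp (\<i> * complex_of_real \<theta>) - 1) * P + (P - P0)"
    by (simp add: algebra_simps)
  moreover have "norm (exp (\<i> * complex_of_real \<theta>) - 1) \<le> \<bar>\<theta>\<bar>"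
    using iexp_approx1[of \<theta> 0] by simp
  ultimately show ?thesis
    by (metis (no_types, opaque_lifting) add_mono mult_right_mono norm_ge_zero norm_mult norm_triangle_le
        order_refl)
qed

lemma norm_phase_remainder_le:
  "norm (exp (\<i> * complex_of_real \<theta>) * P - P0 - (\<i> * complex_of_real \<phi> * P0 - G))
    \<le> \<theta>\<^sup>2 * norm P + \<bar>\<theta>\<bar> * norm (P - P0) + \<bar>\<theta> - \<phi>\<bar> * norm P0 + norm (P - P0 + G)"
proof -
  define E where "E = exp (\<i> * complex_of_real \<theta>)"
  define T1 where "T1 = (E - 1 - \<i> * complex_of_real \<theta>) * P"
  define T2 where "T2 = \<i> * complex_of_real \<theta> * (P - P0)"
  define T3 where "T3 = \<i> * complex_of_real (\<theta> - \<phi>) * P0"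
  have eq: "E * P - P0 - (\<i> * complex_of_real \<phi> * P0 - G) = T1 + T2 + T3 + (P - P0 + G)"
    unfolding T1_def T2_def T3_def by (simp add: algebra_simps)
  have "norm T1 \<le> \<theta>\<^sup>2 * norm P"
  proof -
    have "norm (E - 1 - \<i> * complex_of_real \<theta>) \<le> \<theta>\<^sup>2 / 2"
      using iexp_approx1[of \<theta> 1] unfolding E_def by (simp add: algebra_simps power2_eq_square)
    then have "norm (E - 1 - \<i> * complex_of_real \<theta>) \<le> \<theta>\<^sup>2"
      using zero_le_power2[of \<theta>] by linarith
    then show ?thesis unfolding T1_def norm_mult by (rule mult_right_mono) simp
  qed
  moreover have "norm T2 = \<bar>\<theta>\<bar> * norm (P - P0)" "norm T3 = \<bar>\<theta> - \<phi>\<bar> * norm P0"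
    unfolding T2_def T3_def by (simp_all add: norm_mult del: of_real_diff)
  ultimately show ?thesis
    unfolding E_def[symmetric] eq
    using norm_triangle_ineq[of "T1 + T2 + T3" "P - P0 + G"] norm_triangle_ineq[of "T1 + T2" T3]
      norm_triangle_ineq[of T1 T2] by linarith
qed

lemma phase_expansion_bounds:
  fixes P P0 G :: complex
  assumes Y: "1 \<le> Y" and r: "0 \<le> r" and W: "0 \<le> W" and C: "0 \<le> C"
    and \<theta>: "\<bar>\<theta>\<bar> \<le> Y * r" and \<phi>: "\<bar>\<theta> - \<phi>\<bar> \<le> r\<^sup>2"
    and P: "norm P \<le> C * W" and P0: "norm P0 \<le> C * W" and PP0: "norm (P - P0) \<le> C * r * W"
    and PG: "norm (P - P0 + G) \<le> C * r\<^sup>2 * W"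
  shows "norm (exp (\<i> * complex_of_real \<theta>) * P - P0) \<le> 2 * C * r * (Y\<^sup>2 * W)"
    and "norm (exp (\<i> * complex_of_real \<theta>) * P - P0 - (\<i> * complex_of_real \<phi> * P0 - G))
      \<le> 4 * C * r\<^sup>2 * (Y\<^sup>2 * W)"
proof -
  have Y2: "1 \<le> Y\<^sup>2" "Y \<le> Y\<^sup>2" using Y by (simp, simp add: power2_eq_square mult_le_cancel_left1)
  have CW: "0 \<le> C * W" using C W by simp
  have \<theta>P: "\<bar>\<theta>\<bar> * norm P \<le> C * r * (Y\<^sup>2 * W)"
    using mult_mono[OF \<theta> P] mult_right_mono[OF Y2(2), of "C * r * W"] r CW Y C W by (simp add: mult_ac)
  have PP0': "norm (P - P0) \<le> C * r * (Y\<^sup>2 * W)"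
    using PP0 mult_left_mono[OF Y2(1), of "C * r * W"] C r W by (simp add: mult_ac)
  show "norm (exp (\<i> * complex_of_real \<theta>) * P - P0) \<le> 2 * C * r * (Y\<^sup>2 * W)"
    using norm_phase_diff_le[of \<theta> P P0] \<theta>P PP0' by simp
  have "\<theta>\<^sup>2 * norm P \<le> (Y * r)\<^sup>2 * (C * W)"
    using power_mono[OF \<theta> abs_ge_zero, of 2] P by (intro mult_mono) auto
  moreover have "\<bar>\<theta>\<bar> * norm (P - P0) \<le> (Y * r) * (C * r * W)"
    using \<theta> PP0 r Y by (intro mult_mono) auto
  moreover have "\<bar>\<theta> - \<phi>\<bar> * norm P0 \<le> r\<^sup>2 * (C * W)"
    using \<phi> P0 by (intro mult_mono) auto
  moreover have "(Y * r) * (C * r * W) \<le> C * r\<^sup>2 * (Y\<^sup>2 * W)" "r\<^sup>2 * (C * W) \<le> C * r\<^sup>2 * (Y\<^sup>2 * W)"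
    "C * r\<^sup>2 * W \<le> C * r\<^sup>2 * (Y\<^sup>2 * W)"
    using mult_right_mono[OF Y2(2), of "C * r\<^sup>2 * W"] mult_right_mono[OF Y2(1), of "C * r\<^sup>2 * W"] C r W
    by (simp_all add: power2_eq_square mult_ac)
  ultimately show "norm (exp (\<i> * complex_of_real \<theta>) * P - P0 - (\<i> * complex_of_real \<phi> * P0 - G))
      \<le> 4 * C * r\<^sup>2 * (Y\<^sup>2 * W)"
    using norm_phase_remainder_le[of \<theta> P P0 \<phi> G] PG by (simp add: power_mult_distrib mult_ac)
qed

lemma displace_phase_bounds:
  fixes h :: "('n::finite) phase_point"
  assumes h: "norm h \<le> 1"
  shows "\<bar>(y - (1/2) *\<^sub>R fst h) \<bullet> snd h\<bar> \<le> (1 + norm y) * norm h"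
    and "\<bar>(y - (1/2) *\<^sub>R fst h) \<bullet> snd h - y \<bullet> snd h\<bar> \<le> (norm h)\<^sup>2"
proof -
  have hx: "norm (fst h) \<le> norm h" and hp: "norm (snd h) \<le> norm h"
    using norm_fst_le[of "fst h" "snd h"] norm_snd_le[of "snd h" "fst h"] by auto
  have "\<bar>(y - (1/2) *\<^sub>R fst h) \<bullet> snd h\<bar> \<le> norm (y - (1/2) *\<^sub>R fst h) * norm (snd h)"
    by (rule Cauchy_Schwarz_ineq2)
  also have "\<dots> \<le> (1 + norm y) * norm h"
    using norm_triangle_ineq4[of y "(1/2) *\<^sub>R fst h"] hx h hp by (intro mult_mono) auto
  finally show "\<bar>(y - (1/2) *\<^sub>R fst h) \<bullet> snd h\<bar> \<le> (1 + norm y) * norm h" .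
  have "\<bar>(y - (1/2) *\<^sub>R fst h) \<bullet> snd h - y \<bullet> snd h\<bar> = \<bar>fst h \<bullet> snd h\<bar> / 2"
    by (simp add: inner_diff_left)
  also have "\<dots> \<le> norm (fst h) * norm (snd h)" using Cauchy_Schwarz_ineq2[of "fst h" "snd h"] by simp
  also have "\<dots> \<le> (norm h)\<^sup>2" using hx hp by (simp add: power2_eq_square mult_mono)
  finally show "\<bar>(y - (1/2) *\<^sub>R fst h) \<bullet> snd h - y \<bullet> snd h\<bar> \<le> (norm h)\<^sup>2" .
qed

lemma displace_small_bounds:
  fixes F :: "real^'n \<Rightarrow> complex"
  assumes F: "schwartz F"
  obtains C where "0 \<le> C" "\<And>h y. norm h \<le> 1 \<Longrightarrow> norm (displace h F y) \<le> C * poly_weight N y"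
    "\<And>h y. norm h \<le> 1 \<Longrightarrow> norm (displace h F y - F y) \<le> C * norm h * poly_weight N y"
    "\<And>h y. norm h \<le> 1 \<Longrightarrow>
       norm (displace h F y - F y - displace_generator F h y) \<le> C * (norm h)\<^sup>2 * poly_weight N y"
proof -
  obtain C0 where C0: "0 \<le> C0" "\<And>y. norm (F y) \<le> C0 * poly_weight (2 + N) y"
    using schwartz_weighted_bound[OF F] by blast
  obtain C1 where C1: "0 \<le> C1" "\<And>y s. norm s \<le> 1 \<Longrightarrow> norm (F (y - s) - F y) \<le> C1 * norm s * poly_weight (2 + N) y"
    "\<And>y s. norm s \<le> 1 \<Longrightarrow>
       norm (F (y - s) - F y + frechet_derivative F (at y) s) \<le> C1 * (norm s)\<^sup>2 * poly_weight (2 + N) y"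
    using schwartz_taylor_bounds[OF F] by blast
  define C where "C = 2 ^ (2 + N) * C0 + C1"
  have C_nonneg: "0 \<le> C" unfolding C_def using C0(1) C1(1) by simp
  have "norm (displace h F y) \<le> 4 * C * poly_weight N y \<and>
      norm (displace h F y - F y) \<le> 4 * C * norm h * poly_weight N y \<and>
      norm (displace h F y - F y - displace_generator F h y) \<le> 4 * C * (norm h)\<^sup>2 * poly_weight N y"
    if h: "norm h \<le> 1" for h :: "'n phase_point" and y
  proof -
    define W where "W = poly_weight (2 + N) y"
    have W: "0 \<le> W" unfolding W_def by (rule poly_weight_nonneg)
    have YW: "(1 + norm y)\<^sup>2 * W = poly_weight N y"
      unfolding W_def using poly_weight_mult[of y 2 N] by simp
    have hx: "norm (fst h) \<le> norm h" using norm_fst_le[of "fst h" "snd h"] by simp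
    have hx1: "norm (fst h) \<le> 1" using hx h by linarith
    have "C0 \<le> C" "C1 \<le> C"
    proof -
      have "(1::real) \<le> 2 ^ (2 + N)" by (rule one_le_power) simp
      from mult_right_mono[OF this C0(1)] have "C0 \<le> 2 ^ (2 + N) * C0" by simp
      then show "C0 \<le> C" "C1 \<le> C" unfolding C_def using C0(1) C1(1) by simp_all
    qed
    then have le_C0: "C0 * W \<le> C * W" and le_C1: "C1 * t * W \<le> C * t * W" if "0 \<le> t" for t
      using W that by (auto intro!: mult_right_mono)
    have P: "norm (F (y - fst h)) \<le> C * W"
    proof -
      have "norm (F (y - fst h)) \<le> C0 * poly_weight (2 + N) (y - fst h)" by (rule C0(2))
      also have "\<dots> \<le> C0 * (2 ^ (2 + N) * W)"
        unfolding W_def using hx1 C0(1) by (intro mult_left_mono poly_weight_shift_le_1)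
      also have "\<dots> \<le> C * W" unfolding C_def using C1(1) W by (simp add: algebra_simps)
      finally show ?thesis .
    qed
    have "norm (F (y - fst h) - F y) \<le> C * norm h * W"
      using C1(2)[OF hx1, of y] le_C1[of "norm (fst h)"] mult_right_mono[OF mult_left_mono[OF hx C_nonneg] W]
      unfolding W_def by (simp add: mult_ac)
    moreover have "norm (F (y - fst h) - F y + frechet_derivative F (at y) (fst h)) \<le> C * (norm h)\<^sup>2 * W"
      using C1(3)[OF hx1, of y] le_C1[of "(norm (fst h))\<^sup>2"]
        mult_right_mono[OF mult_left_mono[OF power_mono[OF hx norm_ge_zero, of 2] C_nonneg] W]
      unfolding W_def by (simp add: mult_ac)
    moreover have "norm (F y) \<le> C * W" using C0(2)[of y] le_C0[OF order_refl] unfolding W_def by linarith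
    ultimately have "norm (displace h F y - F y) \<le> 2 * C * norm h * ((1 + norm y)\<^sup>2 * W) \<and>
        norm (displace h F y - F y - displace_generator F h y) \<le> 4 * C * (norm h)\<^sup>2 * ((1 + norm y)\<^sup>2 * W)"
      using phase_expansion_bounds[OF _ norm_ge_zero W C_nonneg displace_phase_bounds[OF h] P]
      unfolding displace_def displace_generator_def by simp
    moreover have "2 * C * norm h * poly_weight N y \<le> 4 * C * norm h * poly_weight N y"
      using C_nonneg by (intro mult_right_mono poly_weight_nonneg) auto
    moreover have "norm (displace h F y) \<le> 4 * C * poly_weight N y"
    proof -
      have "(1::real) \<le> (1 + norm y)\<^sup>2" by (rule one_le_power) simp
      then have "(1::real) \<le> 4 * (1 + norm y)\<^sup>2" by linarith
      from mult_right_mono[OF this mult_nonneg_nonneg[OF C_nonneg W]]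
      have "C * W \<le> 4 * C * ((1 + norm y)\<^sup>2 * W)" by (simp add: mult_ac)
      then show ?thesis using P unfolding norm_displace YW by linarith
    qed
    ultimately show ?thesis unfolding YW by linarith
  qed
  then show thesis using that[of "4 * C"] C_nonneg by auto
qed

lemma poly_weight_shift_fst: "poly_weight N (y - fst \<xi>) \<le> (1 + norm \<xi>) ^ N * poly_weight N y"
  using poly_weight_shift[of N y "fst \<xi>"] norm_fst_le[of "fst \<xi>" "snd \<xi>"]
  by (smt (verit) mult_right_mono norm_ge_zero poly_weight_nonneg power_mono prod.collapse)

lemma abs_symplectic_form_le: "\<bar>symplectic_form \<xi> h\<bar> \<le> 2 * norm \<xi> * norm h"
proof -
  have "\<bar>fst \<xi> \<bullet> snd h\<bar> \<le> norm \<xi> * norm h" "\<bar>fst h \<bullet> snd \<xi>\<bar> \<le> norm \<xi> * norm h"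
    using Cauchy_Schwarz_ineq2[of "fst \<xi>" "snd h"] Cauchy_Schwarz_ineq2[of "fst h" "snd \<xi>"]
      norm_fst_le[of "fst \<xi>" "snd \<xi>"] norm_snd_le[of "snd h" "fst h"]
      norm_fst_le[of "fst h" "snd h"] norm_snd_le[of "snd \<xi>" "fst \<xi>"]
    by (smt (verit, best) mult_mono norm_ge_zero prod.collapse mult.commute)+
  then show ?thesis unfolding symplectic_form_def by linarith
qed

lemma displace_remainder_bounds:
  fixes F :: "real^'n \<Rightarrow> complex"
  assumes F: "schwartz F"
  obtains K where "0 \<le> K"
    "\<And>h y. norm h \<le> 1 \<Longrightarrow>
       norm (displace (\<xi> + h) F y - displace \<xi> F y - displace_deriv F \<xi> h y) \<le> K * (norm h)\<^sup>2 * poly_weight N y"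
    "\<And>h y. norm h \<le> 1 \<Longrightarrow> norm (displace (\<xi> + h) F y - displace \<xi> F y) \<le> K * norm h * poly_weight N y"
proof -
  obtain C where C: "0 \<le> C" "\<And>h y. norm h \<le> 1 \<Longrightarrow> norm (displace h F y) \<le> C * poly_weight N y"
    "\<And>h y. norm h \<le> 1 \<Longrightarrow> norm (displace h F y - F y) \<le> C * norm h * poly_weight N y"
    "\<And>h y. norm h \<le> 1 \<Longrightarrow>
       norm (displace h F y - F y - displace_generator F h y) \<le> C * (norm h)\<^sup>2 * poly_weight N y"
    using displace_small_bounds[OF F] by blast
  define Y where "Y = 1 + norm \<xi>"
  define K where "K = 4 * C * (Y\<^sup>2 * Y ^ N)"
  have "norm (displace (\<xi> + h) F y - displace \<xi> F y - displace_deriv F \<xi> h y) \<le> K * (norm h)\<^sup>2 * poly_weight N y \<and>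
      norm (displace (\<xi> + h) F y - displace \<xi> F y) \<le> K * norm h * poly_weight N y"
    if h: "norm h \<le> 1" for h y
  proof -
    define c where "c = symplectic_form \<xi> h / 2"
    define y' where "y' = y - fst \<xi>"
    define E where "E = exp (\<i> * complex_of_real ((y - (1/2) *\<^sub>R fst \<xi>) \<bullet> snd \<xi>))"
    have "\<bar>c\<bar> \<le> norm \<xi> * norm h"
      using abs_symplectic_form_le[of \<xi> h] unfolding c_def by simp
    also have "\<dots> \<le> Y * norm h" unfolding Y_def by (simp add: mult_right_mono)
    finally have c: "\<bar>c\<bar> \<le> Y * norm h" .
    have F0: "norm (F y') \<le> C * poly_weight N y'" using C(2)[of 0 y'] by (simp add: displace_def)
    have Y1: "1 \<le> Y" unfolding Y_def by simp
    have PG: "norm (displace h F y' - F y' + - displace_generator F h y') \<le> C * (norm h)\<^sup>2 * poly_weight N y'"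
      using C(4)[OF h, of y'] by simp
    note bounds = phase_expansion_bounds[OF Y1 norm_ge_zero poly_weight_nonneg C(1) c _ C(2)[OF h] F0 C(3)[OF h] PG,
        where \<phi>=c, simplified]
    define X1 where "X1 = exp (\<i> * complex_of_real c) * displace h F y' - F y'
      - (\<i> * complex_of_real c * F y' + displace_generator F h y')"
    define X2 where "X2 = exp (\<i> * complex_of_real c) * displace h F y' - F y'"
    have nE: "norm E = 1" unfolding E_def by simp
    have "norm (displace (\<xi> + h) F y - displace \<xi> F y - displace_deriv F \<xi> h y) = norm (E * X1)"
      unfolding displace_add displace_deriv_def c_def X1_def
      by (simp add: displace_def E_def y'_def algebra_simps)
    also have "\<dots> \<le> 4 * C * (norm h)\<^sup>2 * (Y\<^sup>2 * poly_weight N y')"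
      unfolding norm_mult nE X1_def using bounds(2) by simp
    also have "\<dots> \<le> K * (norm h)\<^sup>2 * poly_weight N y"
      using mult_left_mono[OF poly_weight_shift_fst[of N y \<xi>], of "4 * C * (norm h)\<^sup>2 * Y\<^sup>2"] C(1)
      unfolding K_def Y_def y'_def by (simp add: mult_ac)
    finally have first: "norm (displace (\<xi> + h) F y - displace \<xi> F y - displace_deriv F \<xi> h y)
        \<le> K * (norm h)\<^sup>2 * poly_weight N y" .
    have "norm (displace (\<xi> + h) F y - displace \<xi> F y) = norm (E * X2)"
      unfolding displace_add c_def X2_def by (simp add: displace_def E_def y'_def algebra_simps)
    also have "\<dots> \<le> 2 * C * norm h * (Y\<^sup>2 * poly_weight N y')"
      unfolding norm_mult nE X2_def using bounds(1) by simp
    also have "\<dots> \<le> 4 * C * norm h * (Y\<^sup>2 * poly_weight N y')"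
      using C(1) by (intro mult_right_mono mult_nonneg_nonneg poly_weight_nonneg) auto
    also have "\<dots> \<le> K * norm h * poly_weight N y"
      using mult_left_mono[OF poly_weight_shift_fst[of N y \<xi>], of "4 * C * norm h * Y\<^sup>2"] C(1)
      unfolding K_def Y_def y'_def by (simp add: mult_ac)
    finally show ?thesis using first by blast
  qed
  moreover have "0 \<le> K" unfolding K_def Y_def using C(1) by simp
  ultimately show thesis using that by blast
qed

lemma displace_generator_eq:
  assumes F: "schwartz F"
  shows "displace_generator F h y = (\<Sum>b\<in>Basis. \<i> * complex_of_real (snd h \<bullet> b) * coord_mult b F y
      - complex_of_real (fst h \<bullet> b) * iter_partial [b] F y)"
proof -
  have "y \<bullet> snd h = (\<Sum>b\<in>Basis. (snd h \<bullet> b) * (y \<bullet> b))"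
    by (subst euclidean_inner) (simp add: mult.commute)
  then show ?thesis
    unfolding displace_generator_def frechet_derivative_eq_partials[OF F] coord_mult_def
    by (simp add: sum_distrib_left sum_distrib_right sum_subtractf algebra_simps)
qed

lemma displace_deriv_eq:
  assumes F: "schwartz F"
  shows "displace_deriv F \<xi> h y =
    (\<Sum>b\<in>Basis. \<i> * complex_of_real (snd h \<bullet> b) * displace \<xi> (coord_mult b F) y
      - complex_of_real (fst h \<bullet> b) * displace \<xi> (iter_partial [b] F) y)
    + \<i> * complex_of_real (symplectic_form \<xi> h / 2) * displace \<xi> F y"
  unfolding displace_deriv_def displace_def[of \<xi>] displace_generator_eq[OF F]
  by (simp add: sum_distrib_left algebra_simps)

lemma sq_int_displace_deriv:
  assumes F: "schwartz F"
  shows "sq_int (displace_deriv F \<xi> h)"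
proof -
  have "displace_deriv F \<xi> h = (\<lambda>y. (\<Sum>b\<in>Basis. \<i> * complex_of_real (snd h \<bullet> b) * displace \<xi> (coord_mult b F) y
      - complex_of_real (fst h \<bullet> b) * displace \<xi> (iter_partial [b] F) y)
    + \<i> * complex_of_real (symplectic_form \<xi> h / 2) * displace \<xi> F y)"
    using displace_deriv_eq[OF F] by blast
  then show ?thesis
    by (simp only:) (intro sq_int_add sq_int_sum sq_int_diff sq_int_cmult sq_int_displace
        schwartz_coord_mult schwartz_partial F finite_Basis)
qed

lemma displace_l2_remainder:
  fixes F :: "real^'n \<Rightarrow> complex"
  assumes F: "schwartz F"
  obtains K where
    "\<And>h. norm h \<le> 1 \<Longrightarrow>
       l2_norm (\<lambda>y. displace (\<xi> + h) F y - displace \<xi> F y - displace_deriv F \<xi> h y) \<le> K * (norm h)\<^sup>2"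
    "\<And>h. norm h \<le> 1 \<Longrightarrow> l2_norm (\<lambda>y. displace (\<xi> + h) F y - displace \<xi> F y) \<le> K * norm h"
proof -
  obtain K where "0 \<le> K" and K: "\<And>h y. norm h \<le> 1 \<Longrightarrow>
       norm (displace (\<xi> + h) F y - displace \<xi> F y - displace_deriv F \<xi> h y) \<le> K * (norm h)\<^sup>2 * poly_weight CARD('n) y"
    "\<And>h y. norm h \<le> 1 \<Longrightarrow> norm (displace (\<xi> + h) F y - displace \<xi> F y) \<le> K * norm h * poly_weight CARD('n) y"
    using displace_remainder_bounds[OF F, where \<xi>=\<xi> and N="CARD('n)"] by metis
  define W where "W = l2_norm (\<lambda>y::real^'n. complex_of_real (poly_weight CARD('n) y))"
  have D: "sq_int (displace \<eta> F)" for \<eta> by (rule sq_int_displace[OF F])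
  have U: "sq_int (displace_deriv F \<xi> h)" for h by (rule sq_int_displace_deriv[OF F])
  show thesis
  proof (rule that[of "K * W"])
    fix h :: "'n phase_point" assume h: "norm h \<le> 1"
    have "l2_norm (\<lambda>y. displace (\<xi> + h) F y - displace \<xi> F y - displace_deriv F \<xi> h y) \<le> K * (norm h)\<^sup>2 * W"
      unfolding W_def by (rule weighted_bound_imp_l2(2)[OF sq_int_measurable[OF sq_int_diff[OF sq_int_diff[OF D D] U]] K(1)[OF h]])
    then show "l2_norm (\<lambda>y. displace (\<xi> + h) F y - displace \<xi> F y - displace_deriv F \<xi> h y) \<le> K * W * (norm h)\<^sup>2"
      by (simp only: mult_ac)
    have "l2_norm (\<lambda>y. displace (\<xi> + h) F y - displace \<xi> F y) \<le> K * norm h * W"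
      unfolding W_def by (rule weighted_bound_imp_l2(2)[OF sq_int_measurable[OF sq_int_diff[OF D D]] K(2)[OF h]])
    then show "l2_norm (\<lambda>y. displace (\<xi> + h) F y - displace \<xi> F y) \<le> K * W * norm h"
      by (simp only: mult_ac)
  qed
qed

lemma displace_deriv_add:
  assumes "schwartz F"
  shows "displace_deriv F \<xi> (h1 + h2) = (\<lambda>y. displace_deriv F \<xi> h1 y + displace_deriv F \<xi> h2 y)"
proof -
  have "linear (frechet_derivative F (at y))" for y
    using schwartz_differentiable[OF assms] by (rule linear_frechet_derivative)
  then show ?thesis
    by (intro ext) (simp add: displace_deriv_def displace_def displace_generator_def symplectic_form_def
        linear_add algebra_simps add_divide_distrib diff_divide_distrib)
qed

lemma displace_deriv_scaleR:
  assumes "schwartz F"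
  shows "displace_deriv F \<xi> (r *\<^sub>R h) = (\<lambda>y. complex_of_real r * displace_deriv F \<xi> h y)"
proof -
  have "linear (frechet_derivative F (at y))" for y
    using schwartz_differentiable[OF assms] by (rule linear_frechet_derivative)
  then have "frechet_derivative F (at y) (r *\<^sub>R u) = complex_of_real r * frechet_derivative F (at y) u" for y u
    using linear.scaleR[of "frechet_derivative F (at y)" r u] scaleR_conv_of_real[of r] by metis
  then show ?thesis
    by (intro ext) (simp add: displace_deriv_def displace_def displace_generator_def symplectic_form_def
        algebra_simps)
qed

lemma half_symplectic_form_eq_inner:
  "symplectic_form (fst z) (fst v) / 2 = z \<bullet> (((1/2) *\<^sub>R snd (fst v), - (1/2) *\<^sub>R fst (fst v)), (0, 0))"
  "symplectic_form (snd z) (snd v) / 2 = z \<bullet> ((0, 0), ((1/2) *\<^sub>R snd (snd v), - (1/2) *\<^sub>R fst (snd v)))"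
proof -
  obtain a b c d where "z = ((a, b), (c, d))" by (metis prod.collapse)
  then show "symplectic_form (fst z) (fst v) / 2 = z \<bullet> (((1/2) *\<^sub>R snd (fst v), - (1/2) *\<^sub>R fst (fst v)), (0, 0))"
    "symplectic_form (snd z) (snd v) / 2 = z \<bullet> ((0, 0), ((1/2) *\<^sub>R snd (snd v), - (1/2) *\<^sub>R fst (snd v)))"
    by (auto simp: symplectic_form_def inner_commute field_simps)
qed

lemma l2_norm_displace_bound:
  fixes F :: "real^'n \<Rightarrow> complex"
  assumes F: "schwartz F"
  obtains C where "0 \<le> C" "\<And>\<xi>. l2_norm (displace \<xi> F) \<le> C * (1 + norm \<xi>) ^ CARD('n)"
proof -
  obtain C where C0: "0 \<le> C" and C: "\<And>y. norm (F y) \<le> C * poly_weight CARD('n) y"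
    using schwartz_weighted_bound[OF F] by blast
  define W where "W = l2_norm (\<lambda>y::real^'n. complex_of_real (poly_weight CARD('n) y))"
  have "l2_norm (displace \<xi> F) \<le> C * (1 + norm \<xi>) ^ CARD('n) * W" for \<xi>
    unfolding W_def
    by (rule weighted_bound_imp_l2(2)[OF sq_int_measurable[OF sq_int_displace[OF F]] displace_weighted_bound[OF C]])
  moreover have "0 \<le> C * W" unfolding W_def using C0 l2_norm_nonneg by (rule mult_nonneg_nonneg)
  ultimately show thesis using that[of "C * W"] by (simp add: mult_ac)
qed

section \<open>Matrix elements between displaced windows\<close>

definition window_matrix_elem ::
  "((real^('n::finite) \<Rightarrow> complex) \<Rightarrow> (real^'n \<Rightarrow> complex)) \<Rightarrow> (real^'n \<Rightarrow> complex) \<Rightarrow> (real^'n \<Rightarrow> complex)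
    \<Rightarrow> 'n phase_point \<times> 'n phase_point \<Rightarrow> complex" where
  "window_matrix_elem \<rho> F G z = op_form \<rho> (displace (fst z) F) (displace (snd z) G)"

definition window_matrix_elem_deriv ::
  "((real^('n::finite) \<Rightarrow> complex) \<Rightarrow> (real^'n \<Rightarrow> complex)) \<Rightarrow> (real^'n \<Rightarrow> complex) \<Rightarrow> (real^'n \<Rightarrow> complex)
    \<Rightarrow> 'n phase_point \<times> 'n phase_point \<Rightarrow> 'n phase_point \<times> 'n phase_point \<Rightarrow> complex" where
  "window_matrix_elem_deriv \<rho> F G z v =
     op_form \<rho> (displace_deriv F (fst z) (fst v)) (displace (snd z) G) +
     op_form \<rho> (displace (fst z) F) (displace_deriv G (snd z) (snd v))"

inductive_set window_module ::
  "((real^('n::finite) \<Rightarrow> complex) \<Rightarrow> (real^'n \<Rightarrow> complex)) \<Rightarrow> ('n phase_point \<times> 'n phase_point \<Rightarrow> complex) set"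
  for \<rho> where
  window: "schwartz F \<Longrightarrow> schwartz G \<Longrightarrow> window_matrix_elem \<rho> F G \<in> window_module \<rho>"
| zero: "(\<lambda>z. 0) \<in> window_module \<rho>"
| add: "A \<in> window_module \<rho> \<Longrightarrow> B \<in> window_module \<rho> \<Longrightarrow> (\<lambda>z. A z + B z) \<in> window_module \<rho>"
| cmult: "A \<in> window_module \<rho> \<Longrightarrow> (\<lambda>z. c * A z) \<in> window_module \<rho>"
| coord_mult: "A \<in> window_module \<rho> \<Longrightarrow> (\<lambda>z. complex_of_real (z \<bullet> w) * A z) \<in> window_module \<rho>"

lemma window_module_sum:
  "finite I \<Longrightarrow> (\<And>i. i \<in> I \<Longrightarrow> A i \<in> window_module \<rho>) \<Longrightarrow> (\<lambda>z. \<Sum>i\<in>I. A i z) \<in> window_module \<rho>"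
  by (induction I rule: finite_induct) (simp_all add: window_module.zero window_module.add)

lemma window_module_diff:
  "A \<in> window_module \<rho> \<Longrightarrow> B \<in> window_module \<rho> \<Longrightarrow> (\<lambda>z. A z - B z) \<in> window_module \<rho>"
  using window_module.add[OF _ window_module.cmult[of B \<rho> "- 1"], of A] by simp

context
  fixes \<rho> :: "(real^'n \<Rightarrow> complex) \<Rightarrow> (real^'n \<Rightarrow> complex)"
  assumes op: "l2_bounded_operator \<rho>"
begin

lemma op_form_displace_deriv_left:
  assumes F: "schwartz F" and g: "sq_int g"
  shows "op_form \<rho> (displace_deriv F \<xi> h) g =
    (\<Sum>b\<in>Basis. - \<i> * complex_of_real (snd h \<bullet> b) * op_form \<rho> (displace \<xi> (coord_mult b F)) g
       - complex_of_real (fst h \<bullet> b) * op_form \<rho> (displace \<xi> (iter_partial [b] F)) g)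
    - \<i> * complex_of_real (symplectic_form \<xi> h / 2) * op_form \<rho> (displace \<xi> F) g"
proof -
  define T where "T b y = \<i> * complex_of_real (snd h \<bullet> b) * displace \<xi> (coord_mult b F) y
      - complex_of_real (fst h \<bullet> b) * displace \<xi> (iter_partial [b] F) y" for b y
  have sX: "sq_int (displace \<xi> (coord_mult b F))" "sq_int (displace \<xi> (iter_partial [b] F))" if "b \<in> Basis" for b
    using that F by (blast intro: sq_int_displace schwartz_coord_mult schwartz_partial)+
  have sT: "sq_int (T b)" if "b \<in> Basis" for b
    unfolding T_def using sX[OF that] by (intro sq_int_diff sq_int_cmult)
  have "displace_deriv F \<xi> h = (\<lambda>y. (\<Sum>b\<in>Basis. T b y) + \<i> * complex_of_real (symplectic_form \<xi> h / 2) * displace \<xi> F y)"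
    unfolding T_def using displace_deriv_eq[OF F] by blast
  then have "op_form \<rho> (displace_deriv F \<xi> h) g = (\<Sum>b\<in>Basis. op_form \<rho> (T b) g)
      + cnj (\<i> * complex_of_real (symplectic_form \<xi> h / 2)) * op_form \<rho> (displace \<xi> F) g"
    by (simp only: op_form_add_left[OF op sq_int_sum[OF finite_Basis sT] sq_int_cmult[OF sq_int_displace[OF F]] g]
        op_form_sum_left[OF op finite_Basis sT g] op_form_cmult_left[OF op])
  also have "(\<Sum>b\<in>Basis. op_form \<rho> (T b) g) =
      (\<Sum>b\<in>Basis. - \<i> * complex_of_real (snd h \<bullet> b) * op_form \<rho> (displace \<xi> (coord_mult b F)) g
       - complex_of_real (fst h \<bullet> b) * op_form \<rho> (displace \<xi> (iter_partial [b] F)) g)"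
    unfolding T_def using sX g
    by (intro sum.cong refl) (simp add: op_form_diff_left[OF op] op_form_cmult_left[OF op] sq_int_cmult)
  finally show ?thesis by simp
qed

lemma op_form_displace_deriv_right:
  assumes G: "schwartz G" and f: "sq_int f"
  shows "op_form \<rho> f (displace_deriv G \<xi> h) =
    (\<Sum>b\<in>Basis. \<i> * complex_of_real (snd h \<bullet> b) * op_form \<rho> f (displace \<xi> (coord_mult b G))
       - complex_of_real (fst h \<bullet> b) * op_form \<rho> f (displace \<xi> (iter_partial [b] G)))
    + \<i> * complex_of_real (symplectic_form \<xi> h / 2) * op_form \<rho> f (displace \<xi> G)"
proof -
  define T where "T b y = \<i> * complex_of_real (snd h \<bullet> b) * displace \<xi> (coord_mult b G) y
      - complex_of_real (fst h \<bullet> b) * displace \<xi> (iter_partial [b] G) y" for b y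
  have sX: "sq_int (displace \<xi> (coord_mult b G))" "sq_int (displace \<xi> (iter_partial [b] G))" if "b \<in> Basis" for b
    using that G by (blast intro: sq_int_displace schwartz_coord_mult schwartz_partial)+
  have sT: "sq_int (T b)" if "b \<in> Basis" for b
    unfolding T_def using sX[OF that] by (intro sq_int_diff sq_int_cmult)
  have "displace_deriv G \<xi> h = (\<lambda>y. (\<Sum>b\<in>Basis. T b y) + \<i> * complex_of_real (symplectic_form \<xi> h / 2) * displace \<xi> G y)"
    unfolding T_def using displace_deriv_eq[OF G] by blast
  then have "op_form \<rho> f (displace_deriv G \<xi> h) = (\<Sum>b\<in>Basis. op_form \<rho> f (T b))
      + \<i> * complex_of_real (symplectic_form \<xi> h / 2) * op_form \<rho> f (displace \<xi> G)"
    by (simp only: op_form_add_right[OF op f sq_int_sum[OF finite_Basis sT] sq_int_cmult[OF sq_int_displace[OF G]]]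
        op_form_sum_right[OF op f finite_Basis sT] op_form_cmult_right[OF op f sq_int_displace[OF G]])
  also have "(\<Sum>b\<in>Basis. op_form \<rho> f (T b)) =
      (\<Sum>b\<in>Basis. \<i> * complex_of_real (snd h \<bullet> b) * op_form \<rho> f (displace \<xi> (coord_mult b G))
       - complex_of_real (fst h \<bullet> b) * op_form \<rho> f (displace \<xi> (iter_partial [b] G)))"
    unfolding T_def using sX f
    by (intro sum.cong refl) (simp add: op_form_diff_right[OF op] op_form_cmult_right[OF op] sq_int_cmult)
  finally show ?thesis .
qed

lemma window_matrix_elem_deriv_linear:
  assumes F: "schwartz F" and G: "schwartz G"
  shows "bounded_linear (window_matrix_elem_deriv \<rho> F G z)"
proof -
  have "linear (window_matrix_elem_deriv \<rho> F G z)"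
  proof (rule linearI)
    fix v1 v2 :: "'n phase_point \<times> 'n phase_point"
    show "window_matrix_elem_deriv \<rho> F G z (v1 + v2) = window_matrix_elem_deriv \<rho> F G z v1 + window_matrix_elem_deriv \<rho> F G z v2"
      unfolding window_matrix_elem_deriv_def fst_add snd_add displace_deriv_add[OF F] displace_deriv_add[OF G]
      using F G by (simp add: op_form_add_left[OF op] op_form_add_right[OF op] sq_int_displace_deriv sq_int_displace)
  next
    fix r :: real and v :: "'n phase_point \<times> 'n phase_point"
    show "window_matrix_elem_deriv \<rho> F G z (r *\<^sub>R v) = r *\<^sub>R window_matrix_elem_deriv \<rho> F G z v"
      unfolding window_matrix_elem_deriv_def fst_scaleR snd_scaleR displace_deriv_scaleR[OF F] displace_deriv_scaleR[OF G]
      using F G by (simp add: op_form_cmult_left[OF op] op_form_cmult_right[OF op] sq_int_displace_deriv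
          sq_int_displace scaleR_conv_of_real distrib_left)
  qed
  then show ?thesis by (simp add: linear_conv_bounded_linear)
qed

lemma window_matrix_elem_has_derivative:
  assumes F: "schwartz F" and G: "schwartz G"
  shows "(window_matrix_elem \<rho> F G has_derivative window_matrix_elem_deriv \<rho> F G z) (at z)"
proof -
  obtain Ka where Ka:
    "\<And>h. norm h \<le> 1 \<Longrightarrow>
       l2_norm (\<lambda>y. displace (fst z + h) F y - displace (fst z) F y - displace_deriv F (fst z) h y) \<le> Ka * (norm h)\<^sup>2"
    "\<And>h. norm h \<le> 1 \<Longrightarrow> l2_norm (\<lambda>y. displace (fst z + h) F y - displace (fst z) F y) \<le> Ka * norm h"
    using displace_l2_remainder[OF F, where \<xi>="fst z"] by blast
  obtain Kb where Kb:
    "\<And>k. norm k \<le> 1 \<Longrightarrow>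
       l2_norm (\<lambda>y. displace (snd z + k) G y - displace (snd z) G y - displace_deriv G (snd z) k y) \<le> Kb * (norm k)\<^sup>2"
    "\<And>k. norm k \<le> 1 \<Longrightarrow> l2_norm (\<lambda>y. displace (snd z + k) G y - displace (snd z) G y) \<le> Kb * norm k"
    using displace_l2_remainder[OF G, where \<xi>="snd z"] by blast
  define K where "K = max Ka Kb"
  have le: "Ka * t \<le> K * t" "Kb * t \<le> K * t" if "0 \<le> t" for t
    unfolding K_def using that by (auto intro: mult_right_mono)
  have "((\<lambda>z'. op_form \<rho> (displace (fst z') F) (displace (snd z') G)) has_derivative
      (\<lambda>v. op_form \<rho> (displace_deriv F (fst z) (fst v)) (displace (snd z) G) +
           op_form \<rho> (displace (fst z) F) (displace_deriv G (snd z) (snd v)))) (at (fst z, snd z))"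
  proof (rule op_form_has_derivative[OF op, where K=K and a="\<lambda>\<xi>. displace \<xi> F" and b="\<lambda>\<eta>. displace \<eta> G"
        and A="displace_deriv F (fst z)" and B="displace_deriv G (snd z)" and \<alpha>="fst z" and \<beta>="snd z"])
    show "bounded_linear (\<lambda>v. op_form \<rho> (displace_deriv F (fst z) (fst v)) (displace (snd z) G) +
           op_form \<rho> (displace (fst z) F) (displace_deriv G (snd z) (snd v)))"
      using window_matrix_elem_deriv_linear[OF F G, of z] unfolding window_matrix_elem_deriv_def .
  next
    fix h :: "'n phase_point" assume h: "norm h \<le> 1"
    show "l2_norm (\<lambda>y. displace (fst z + h) F y - displace (fst z) F y - displace_deriv F (fst z) h y) \<le> K * (norm h)\<^sup>2"
      using Ka(1)[OF h] le(1)[OF zero_le_power2, of "norm h"] by linarith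
    show "l2_norm (\<lambda>y. displace (fst z + h) F y - displace (fst z) F y) \<le> K * norm h"
      using Ka(2)[OF h] le(1)[OF norm_ge_zero, of h] by linarith
    show "l2_norm (\<lambda>y. displace (snd z + h) G y - displace (snd z) G y - displace_deriv G (snd z) h y) \<le> K * (norm h)\<^sup>2"
      using Kb(1)[OF h] le(2)[OF zero_le_power2, of "norm h"] by linarith
    show "l2_norm (\<lambda>y. displace (snd z + h) G y - displace (snd z) G y) \<le> K * norm h"
      using Kb(2)[OF h] le(2)[OF norm_ge_zero, of h] by linarith
  qed (use F G in \<open>simp_all add: sq_int_displace sq_int_displace_deriv\<close>)
  then show ?thesis unfolding window_matrix_elem_def[abs_def] window_matrix_elem_deriv_def[abs_def] by simp
qed

lemma window_matrix_elem_poly_bounded: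
  assumes F: "schwartz F" and G: "schwartz G"
  shows "poly_bounded (window_matrix_elem \<rho> F G)"
proof -
  obtain C where C0: "0 \<le> C"
    and C: "\<And>f g. sq_int f \<Longrightarrow> sq_int g \<Longrightarrow> norm (op_form \<rho> f g) \<le> C * l2_norm f * l2_norm g"
    using op_form_bound[OF op] by blast
  obtain CF where CF: "0 \<le> CF" "\<And>\<xi>. l2_norm (displace \<xi> F) \<le> CF * (1 + norm \<xi>) ^ CARD('n)"
    using l2_norm_displace_bound[OF F] by blast
  obtain CG where CG: "0 \<le> CG" "\<And>\<xi>. l2_norm (displace \<xi> G) \<le> CG * (1 + norm \<xi>) ^ CARD('n)"
    using l2_norm_displace_bound[OF G] by blast
  have "norm (window_matrix_elem \<rho> F G z) \<le> (C * CF * CG) * (1 + norm z) ^ (CARD('n) + CARD('n))" for z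
  proof -
    have "(1 + norm (fst z)) ^ CARD('n) \<le> (1 + norm z) ^ CARD('n)" "(1 + norm (snd z)) ^ CARD('n) \<le> (1 + norm z) ^ CARD('n)"
      using norm_fst_le[of "fst z" "snd z"] norm_snd_le[of "snd z" "fst z"] by (auto intro!: power_mono)
    then have "l2_norm (displace (fst z) F) \<le> CF * (1 + norm z) ^ CARD('n)"
      "l2_norm (displace (snd z) G) \<le> CG * (1 + norm z) ^ CARD('n)"
      using CF CG by (meson mult_left_mono order_trans)+
    then have "C * l2_norm (displace (fst z) F) * l2_norm (displace (snd z) G)
        \<le> C * (CF * (1 + norm z) ^ CARD('n)) * (CG * (1 + norm z) ^ CARD('n))"
      using C0 CF(1) by (intro mult_mono mult_left_mono l2_norm_nonneg) auto
    moreover have "norm (window_matrix_elem \<rho> F G z) \<le> C * l2_norm (displace (fst z) F) * l2_norm (displace (snd z) G)"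
      unfolding window_matrix_elem_def by (rule C[OF sq_int_displace[OF F] sq_int_displace[OF G]])
    ultimately show ?thesis by (simp add: power_add mult_ac)
  qed
  then show ?thesis unfolding poly_bounded_def by blast
qed

lemma window_matrix_elem_deriv_eq:
  assumes F: "schwartz F" and G: "schwartz G"
  shows "window_matrix_elem_deriv \<rho> F G z v =
    (\<Sum>b\<in>Basis. - \<i> * complex_of_real (snd (fst v) \<bullet> b) * window_matrix_elem \<rho> (coord_mult b F) G z
       - complex_of_real (fst (fst v) \<bullet> b) * window_matrix_elem \<rho> (iter_partial [b] F) G z)
    - \<i> * (complex_of_real (z \<bullet> (((1/2) *\<^sub>R snd (fst v), - (1/2) *\<^sub>R fst (fst v)), (0, 0))) * window_matrix_elem \<rho> F G z)
    + (\<Sum>b\<in>Basis. \<i> * complex_of_real (snd (snd v) \<bullet> b) * window_matrix_elem \<rho> F (coord_mult b G) z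
       - complex_of_real (fst (snd v) \<bullet> b) * window_matrix_elem \<rho> F (iter_partial [b] G) z)
    + \<i> * (complex_of_real (z \<bullet> ((0, 0), ((1/2) *\<^sub>R snd (snd v), - (1/2) *\<^sub>R fst (snd v)))) * window_matrix_elem \<rho> F G z)"
  unfolding window_matrix_elem_deriv_def window_matrix_elem_def half_symplectic_form_eq_inner[symmetric]
    op_form_displace_deriv_left[OF F sq_int_displace[OF G]] op_form_displace_deriv_right[OF G sq_int_displace[OF F]]
  by (simp add: algebra_simps)

lemma window_module_poly_bounded: "A \<in> window_module \<rho> \<Longrightarrow> poly_bounded A"
  by (induction rule: window_module.induct)
    (auto intro: window_matrix_elem_poly_bounded poly_bounded_add poly_bounded_cmult
      poly_bounded_coord_mult poly_bounded_const)

lemma window_module_has_derivative: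
  "A \<in> window_module \<rho> \<Longrightarrow>
    \<exists>A'. (\<forall>z. (A has_derivative A' z) (at z)) \<and> (\<forall>v. (\<lambda>z. A' z v) \<in> window_module \<rho>)"
proof (induction rule: window_module.induct)
  case (window F G)
  have "(\<lambda>z. window_matrix_elem_deriv \<rho> F G z v) \<in> window_module \<rho>" for v
    unfolding window_matrix_elem_deriv_eq[OF window]
    by (intro window_module.intros window_module_sum window_module_diff finite_Basis
        schwartz_coord_mult schwartz_partial window)
  then show ?case using window_matrix_elem_has_derivative[OF window] by blast
next
  case zero
  then show ?case by (intro exI[of _ "\<lambda>z v. 0"]) (auto intro: window_module.zero)
next
  case (add A B)
  then obtain A' B' where "\<And>z. (A has_derivative A' z) (at z)" "\<And>v. (\<lambda>z. A' z v) \<in> window_module \<rho>"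
    "\<And>z. (B has_derivative B' z) (at z)" "\<And>v. (\<lambda>z. B' z v) \<in> window_module \<rho>"
    by blast
  then show ?case
    by (intro exI[of _ "\<lambda>z v. A' z v + B' z v"]) (auto intro: has_derivative_add window_module.add)
next
  case (cmult A c)
  then obtain A' where "\<And>z. (A has_derivative A' z) (at z)" "\<And>v. (\<lambda>z. A' z v) \<in> window_module \<rho>"
    by blast
  then show ?case
    by (intro exI[of _ "\<lambda>z v. c * A' z v"]) (auto intro: has_derivative_mult_right window_module.cmult)
next
  case (coord_mult A w)
  then obtain A' where A': "\<And>z. (A has_derivative A' z) (at z)" "\<And>v. (\<lambda>z. A' z v) \<in> window_module \<rho>"
    by blast
  have "((\<lambda>z. complex_of_real (z \<bullet> w) * A z) has_derivative
      (\<lambda>v. complex_of_real (z \<bullet> w) * A' z v + complex_of_real (v \<bullet> w) * A z)) (at z)" for z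
    by (intro has_derivative_mult has_derivative_coord A')
  moreover have "(\<lambda>z. complex_of_real (z \<bullet> w) * A' z v + complex_of_real (v \<bullet> w) * A z) \<in> window_module \<rho>" for v
    using A'(2) coord_mult.hyps by (intro window_module.intros)
  ultimately show ?case
    by (intro exI[of _ "\<lambda>z v. complex_of_real (z \<bullet> w) * A' z v + complex_of_real (v \<bullet> w) * A z"]) simp
qed

end

theorem corollary2:
  fixes \<rho> :: "(real^'n \<Rightarrow> complex) \<Rightarrow> (real^'n \<Rightarrow> complex)"
    and chi :: "real^'n \<Rightarrow> complex"
  assumes "quantum_state \<rho>"
    and "schwartz chi"
    and "l2_norm chi = 1"
    and "rapidly_decaying (matrix_elem \<rho> chi)"
  shows "schwartz (matrix_elem \<rho> chi)"
proof -
  have op: "l2_bounded_operator \<rho>"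
    using assms(1) unfolding quantum_state_def l2_positive_trace_class_def by blast
  have "matrix_elem \<rho> chi = window_matrix_elem \<rho> chi chi"
    by (auto simp: matrix_elem_def window_matrix_elem_def op_form_def)
  moreover have "window_matrix_elem \<rho> chi chi \<in> window_module \<rho>"
    using assms(2) assms(2) by (rule window_module.window)
  ultimately show ?thesis
    using schwartz_of_derivative_closed_class[OF window_module_has_derivative[OF op] window_module_poly_bounded[OF op]]
      assms(4) rapidly_decaying_iff_rapid_decay by metis
qed

end
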